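(* Let $t\in\mathbf{Z}$, $m\in\mathbf{N}\cup\{\infty\}$, and $q>1$ a power of $p$. For every $\underline{\mathcal{L}_m}$-algebra $k$, the Frobenius operator $F:W^{(t)}_{m,q}(k)\to W^{(t+1)}_{m,q}(k)$, $(\alpha_0,\alpha_1,\dots)\mapsto(\alpha_0^q,\alpha_1^q,\dots)$, is a ring homomorphism, and it is natural in $k$; that is, it defines a morphism of ring schemes $W^{(t)}_{m,q}\to W^{(t+1)}_{m,q}$ over $\underline{\mathcal{L}_m}$.
   Context: Fix a prime $p$. $\mathcal{L}^{(t)}_{m,q}:=\mathbf{Z}[\omega_i^{q^{-\infty}}\mid1\le i\le m][[\pi]]/(p-\sum_{i=1}^m\omega_i^{q^t}\pi^i,\pi^{m+1})$ (with $\pi^{\infty+1}:=0$) and $\underline{\mathcal{L}_m}:=\mathbf{F}_p[\omega_i\mid1\le i\le m]^{\mathrm{pf}}$. Arithmetic polynomials $Q^{\ast(t)}_{i,q}$ ($\ast\in\{+,\times\}$) are the unique elements of $\underline{\mathcal{L}_\infty}[X_i^{p^{-\infty}},Y_i^{p^{-\infty}}]$ with $\sum_iX_i^{q^{-i}}\pi^i\ast\sum_iY_i^{q^{-i}}\pi^i=\sum_i[Q^{\ast(t)}_{i,q}(X,Y)^{q^{-i}}]\pi^i$ in the $\pi$-adic completion of $\mathcal{L}^{(t)}_{\infty,q}[X_i^{p^{-\infty}},Y_i^{p^{-\infty}}]$, $[-]$ being the multiplicative section from the perfect residue ring; $Q^{\ast(t)}_{n,q}$ is a polynomial in $X_0..X_n,Y_0..Y_n$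 with coefficients in $\mathbf{F}_p[\omega_1^{q^t},\dots,\omega_n^{q^t}]\subset\underline{\mathcal{L}_m}$ for $n\le m$. For an $\underline{\mathcal{L}_m}$-algebra $k$, $W^{(t)}_{m,q}(k)$ is the ring $k^{m+1}$ (tuples indexed by $0\le i\le m$) with $(a+b)_n=Q^{+(t)}_{n,q}(a,b)$ and $(ab)_n=Q^{\times(t)}_{n,q}(a,b)$, functorial coordinatewise. *)

theory Defs
  imports "HOL-Library.Poly_Mapping" "HOL-Computational_Algebra.Polynomial" "HOL-Library.Extended_Nat"
begin

text \<open>Variables: omega_i (i >= 1 used), X_i, Y_i (i >= 0).\<close>
datatype var = Om nat | Xv nat | Yv nat

text \<open>Monomials with nonnegative rational exponents; the big ring
  R = Z[omega^(p^-inf), X^(p^-inf), Y^(p^-inf)] (only exponents in Z[1/p]_{>=0} are used).\<close>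
type_synonym mon = "var \<Rightarrow>\<^sub>0 rat"
type_synonym R = "mon \<Rightarrow>\<^sub>0 int"

definition padic_exp :: "nat \<Rightarrow> rat \<Rightarrow> bool" where
  "padic_exp p e \<longleftrightarrow> 0 \<le> e \<and> (\<exists>k::nat. e * of_nat p ^ k \<in> \<int>)"

definition term_R :: "mon \<Rightarrow> R" where
  "term_R \<mu> = Poly_Mapping.single \<mu> 1"

text \<open>Canonical representatives (coefficients in {0..p-1}) of elements of
  L_m = F_p[omega_1..omega_m]^pf  (m = \<infinity> allowed).\<close>
definition Lm_elem :: "nat \<Rightarrow> enat \<Rightarrow> R \<Rightarrow> bool" where
  "Lm_elem p m a \<longleftrightarrow>
     (\<forall>(\<mu>::mon)\<in>Poly_Mapping.keys a. 0 \<le> Poly_Mapping.lookup a \<mu> \<and> Poly_Mapping.lookup a \<mu> < int p \<and>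
        (\<forall>(v::var)\<in>Poly_Mapping.keys \<mu>. (\<exists>i. v = Om i \<and> 1 \<le> i \<and> enat i \<le> m) \<and> padic_exp p (Poly_Mapping.lookup \<mu> v)))"

text \<open>Canonical representatives of elements of L_infty[X_i^(p^-inf), Y_i^(p^-inf)].\<close>
definition LXY_elem :: "nat \<Rightarrow> R \<Rightarrow> bool" where
  "LXY_elem p a \<longleftrightarrow>
     (\<forall>(\<mu>::mon)\<in>Poly_Mapping.keys a. 0 \<le> Poly_Mapping.lookup a \<mu> \<and> Poly_Mapping.lookup a \<mu> < int p \<and>
        (\<forall>(v::var)\<in>Poly_Mapping.keys \<mu>. (\<forall>i. v = Om i \<longrightarrow> 1 \<le> i) \<and> padic_exp p (Poly_Mapping.lookup \<mu> v)))"

text \<open>Reduction of coefficients mod p (ring operations of the perfect F_p-algebras on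
  canonical representatives).\<close>
definition modp :: "nat \<Rightarrow> R \<Rightarrow> R" where
  "modp p a = Poly_Mapping.map (\<lambda>c. c mod int p) a"

text \<open>s-th root in the perfect F_p-algebra (s a power of p), lifted to R with the same
  coefficients: divide all exponents by s.\<close>
definition rootR :: "nat \<Rightarrow> R \<Rightarrow> R" where
  "rootR s a = (\<Sum>\<mu>\<in>Poly_Mapping.keys a. Poly_Mapping.single (Poly_Mapping.map (\<lambda>e. e / of_nat s) \<mu>) (Poly_Mapping.lookup a \<mu>))"

text \<open>Teichmueller lift [a] modulo pi^(n+1): (any lift of a^(p^-n))^(p^n).\<close>
definition teich :: "nat \<Rightarrow> nat \<Rightarrow> R \<Rightarrow> R" where
  "teich p n a = (rootR (p ^ n) a) ^ (p ^ n)"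

text \<open>p - sum_{i=1}^{n} omega_i^(q^t) pi^i  (the relation of L^(t)_{infty,q}, modulo pi^(n+1)).\<close>
definition frel :: "nat \<Rightarrow> nat \<Rightarrow> int \<Rightarrow> nat \<Rightarrow> R poly" where
  "frel p q t n = [:of_nat p:] -
     (\<Sum>i\<in>{1..n}. monom (term_R (Poly_Mapping.single (Om i) ((of_nat q :: rat) powi t))) i)"

text \<open>Congruence modulo the ideal (relation, pi^(n+1)) of R[pi]; the family of these
  congruences for all n is equality in the pi-adic completion.\<close>
definition cong_pi :: "nat \<Rightarrow> nat \<Rightarrow> int \<Rightarrow> nat \<Rightarrow> R poly \<Rightarrow> R poly \<Rightarrow> bool" where
  "cong_pi p q t n A B \<longleftrightarrow> (\<exists>g h. A - B = frel p q t n * g + monom 1 (Suc n) * h)"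

definition xser :: "nat \<Rightarrow> (nat \<Rightarrow> var) \<Rightarrow> nat \<Rightarrow> R poly" where
  "xser q V n = (\<Sum>i\<le>n. monom (term_R (Poly_Mapping.single (V i) (1 / (of_nat q) ^ i))) i)"

text \<open>Defining property of the arithmetic polynomials Q^{*(t)}_{i,q}, * given by op.\<close>
definition Qprop :: "nat \<Rightarrow> nat \<Rightarrow> int \<Rightarrow> (R poly \<Rightarrow> R poly \<Rightarrow> R poly) \<Rightarrow> (nat \<Rightarrow> R) \<Rightarrow> bool" where
  "Qprop p q t op Q \<longleftrightarrow> (\<forall>i. LXY_elem p (Q i)) \<and>
     (\<forall>n. cong_pi p q t n (op (xser q Xv n) (xser q Yv n))
            (\<Sum>i\<le>n. monom (teich p n (rootR (q ^ i) (Q i))) i))"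

definition Qadd :: "nat \<Rightarrow> nat \<Rightarrow> int \<Rightarrow> nat \<Rightarrow> R" where
  "Qadd p q t = (THE Q. Qprop p q t (+) Q)"

definition Qmul :: "nat \<Rightarrow> nat \<Rightarrow> int \<Rightarrow> nat \<Rightarrow> R" where
  "Qmul p q t = (THE Q. Qprop p q t (*) Q)"

text \<open>Structure of an L_m-algebra: a ring homomorphism from L_m (on canonical reps).\<close>
definition Lm_alg :: "nat \<Rightarrow> enat \<Rightarrow> (R \<Rightarrow> 'k::comm_ring_1) \<Rightarrow> bool" where
  "Lm_alg p m \<phi> \<longleftrightarrow> \<phi> 1 = 1 \<and>
     (\<forall>a b. Lm_elem p m a \<longrightarrow> Lm_elem p m b \<longrightarrow>
        \<phi> (modp p (a + b)) = \<phi> a + \<phi> b \<and> \<phi> (modp p (a * b)) = \<phi> a * \<phi> b)"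

definition omega_part :: "mon \<Rightarrow> mon" where
  "omega_part \<mu> = (\<Sum>v\<in>{v\<in>Poly_Mapping.keys \<mu>. \<exists>i. v = Om i}. Poly_Mapping.single v (Poly_Mapping.lookup \<mu> v))"

text \<open>Evaluation of Q (a polynomial in X_i, Y_i with coefficients in L_m) at tuples a, b of k.\<close>
definition evalQ :: "(R \<Rightarrow> 'k::comm_ring_1) \<Rightarrow> R \<Rightarrow> (nat \<Rightarrow> 'k) \<Rightarrow> (nat \<Rightarrow> 'k) \<Rightarrow> 'k" where
  "evalQ \<phi> Q a b = (\<Sum>\<mu>\<in>Poly_Mapping.keys Q. \<phi> (Poly_Mapping.single (omega_part \<mu>) (Poly_Mapping.lookup Q \<mu>)) *
      (\<Prod>v\<in>Poly_Mapping.keys \<mu>. (case v of Xv j \<Rightarrow> a j ^ nat \<lfloor>Poly_Mapping.lookup \<mu> v\<rfloor>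
                              | Yv j \<Rightarrow> b j ^ nat \<lfloor>Poly_Mapping.lookup \<mu> v\<rfloor>
                              | Om _ \<Rightarrow> 1)))"

text \<open>Ring operations of W^(t)_{m,q}(k) (coordinates n <= m are the relevant ones).\<close>
definition W_add :: "nat \<Rightarrow> nat \<Rightarrow> int \<Rightarrow> (R \<Rightarrow> 'k::comm_ring_1) \<Rightarrow> (nat \<Rightarrow> 'k) \<Rightarrow> (nat \<Rightarrow> 'k) \<Rightarrow> nat \<Rightarrow> 'k" where
  "W_add p q t \<phi> a b = (\<lambda>n. evalQ \<phi> (Qadd p q t n) a b)"

definition W_mul :: "nat \<Rightarrow> nat \<Rightarrow> int \<Rightarrow> (R \<Rightarrow> 'k::comm_ring_1) \<Rightarrow> (nat \<Rightarrow> 'k) \<Rightarrow> (nat \<Rightarrow> 'k) \<Rightarrow> nat \<Rightarrow> 'k" where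
  "W_mul p q t \<phi> a b = (\<lambda>n. evalQ \<phi> (Qmul p q t n) a b)"

definition W_zero :: "nat \<Rightarrow> 'k::comm_ring_1" where
  "W_zero = (\<lambda>n. 0)"

definition W_one :: "nat \<Rightarrow> 'k::comm_ring_1" where
  "W_one = (\<lambda>n. if n = 0 then 1 else 0)"

definition Frob :: "nat \<Rightarrow> (nat \<Rightarrow> 'k::comm_ring_1) \<Rightarrow> nat \<Rightarrow> 'k" where
  "Frob q a = (\<lambda>i. a i ^ q)"

end

theory Submission
  imports Defs
begin

text \<open>The arithmetic polynomials Q^(t) are characterised by congruences in R[pi], where
  R = Z[omega^(q^-oo), X^(p^-oo), Y^(p^-oo)], modulo the ideals (p - sum_i omega_i^(q^t) pi^i, pi^(n+1)).
  Teichmueller expansions modulo these ideals exist and are unique: the digits are extracted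
  modulo p one at a time, and the lift [a] = (a^(p^-n))^(p^n) is well defined modulo pi^(n+1)
  because p lies in the ideal generated by the relation and pi. The substitution
  omega_i |-> omega_i^q maps the relation for t onto the relation for t + 1 and fixes the series
  sum_i X_i^(q^-i) pi^i and sum_i Y_i^(q^-i) pi^i, so by uniqueness Q^(t+1) is obtained from Q^(t)
  by this substitution. In an L_m-algebra k, which has characteristic p, the substitution acts on
  the coefficients as the q-th power map, because a coefficient digit c in {0..<p} satisfies
  c^q = c mod p; additivity of the q-th power map of k then gives
  Q^(t)(a, b)^q = Q^(t+1)(a^q, b^q). Naturality is clear, F being a coordinatewise power.\<close>

lemma binomial_prime_remainder:
  fixes x y :: "'a::comm_ring_1"
  assumes p: "prime p"
  shows "\<exists>w. (x + y) ^ p = x ^ p + y ^ p + of_nat p * y * w"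
proof -
  have p1: "p > 1" using p prime_gt_1_nat by blast
  define w where "w = (\<Sum>k\<in>{1..<p}. of_nat ((p choose k) div p) * y ^ (k - 1) * x ^ (p - k) :: 'a)"
  have middle: "(\<Sum>k\<in>{1..<p}. of_nat (p choose k) * y ^ k * x ^ (p - k)) = of_nat p * y * w"
    unfolding w_def sum_distrib_left
  proof (rule sum.cong[OF refl])
    fix k assume k: "k \<in> {1..<p}"
    have "p dvd (p choose k)" using dvd_choose_prime[of k p] k p by auto
    then have c: "p choose k = p * ((p choose k) div p)" by simp
    have yk: "y ^ k = y * y ^ (k - 1)" using k by (cases k) auto
    show "of_nat (p choose k) * y ^ k * x ^ (p - k) =
          of_nat p * y * (of_nat ((p choose k) div p) * y ^ (k - 1) * x ^ (p - k))"
      by (subst c, subst yk) (simp add: algebra_simps)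
  qed
  have "(x + y) ^ p = (\<Sum>k\<le>p. of_nat (p choose k) * y ^ k * x ^ (p - k))"
    by (subst add.commute) (rule binomial_ring)
  also have "{..p} = insert 0 (insert p {1..<p})" using p1 by auto
  also have "(\<Sum>k\<in>insert 0 (insert p {1..<p}). of_nat (p choose k) * y ^ k * x ^ (p - k))
     = x ^ p + y ^ p + of_nat p * y * w"
    using p1 middle by simp
  finally show ?thesis by blast
qed

lemma dvd_diff_trans:
  fixes a b c d :: "'a::comm_ring_1"
  assumes "c dvd a - b" "c dvd b - d"
  shows "c dvd a - d"
proof -
  have "a - d = (a - b) + (b - d)" by simp
  then show ?thesis using assms by (metis dvd_add)
qed

lemma dvd_power_diff:
  fixes x y c :: "'a::comm_ring_1"
  assumes "c dvd x - y"
  shows "c dvd x ^ n - y ^ n"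
  by (metis assms power_diff_sumr2 dvd_mult2)

lemma prime_dvd_sum_power_diff:
  fixes f :: "'b \<Rightarrow> 'a::comm_ring_1"
  assumes p: "prime p"
  shows "of_nat p dvd (\<Sum>i\<in>S. f i) ^ p - (\<Sum>i\<in>S. f i ^ p)"
proof (induction S rule: infinite_finite_induct)
  case (insert a S)
  obtain w where w: "(f a + sum f S) ^ p = f a ^ p + sum f S ^ p + of_nat p * sum f S * w"
    using binomial_prime_remainder[OF p] by blast
  have "(\<Sum>i\<in>insert a S. f i) ^ p - (\<Sum>i\<in>insert a S. f i ^ p)
    = of_nat p * (sum f S * w) + (sum f S ^ p - (\<Sum>i\<in>S. f i ^ p))"
    using insert w by (simp add: algebra_simps)
  then show ?case using insert.IH by (metis dvd_add dvd_triv_left)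
qed (use p prime_gt_0_nat in \<open>simp_all add: zero_power\<close>)

lemma prime_dvd_sum_power_prime_power_diff:
  fixes f :: "'b \<Rightarrow> 'a::comm_ring_1"
  assumes p: "prime p"
  shows "of_nat p dvd (\<Sum>i\<in>S. f i) ^ (p ^ k) - (\<Sum>i\<in>S. f i ^ (p ^ k))"
proof (induction k)
  case (Suc k)
  have "(\<Sum>i\<in>S. f i) ^ (p ^ Suc k) - (\<Sum>i\<in>S. f i ^ (p ^ Suc k)) =
     (((\<Sum>i\<in>S. f i) ^ (p ^ k)) ^ p - (\<Sum>i\<in>S. f i ^ (p ^ k)) ^ p)
     + ((\<Sum>i\<in>S. f i ^ (p ^ k)) ^ p - (\<Sum>i\<in>S. (f i ^ (p ^ k)) ^ p))"
    by (simp add: power_mult[symmetric] mult.commute)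
  then show ?case
    using dvd_power_diff[OF Suc] prime_dvd_sum_power_diff[OF p] by (metis dvd_add)
qed simp

lemma fermat_int:
  fixes c :: int
  assumes p: "prime p"
  shows "int p dvd c ^ p - c"
proof -
  have nat_case: "int p dvd int n ^ p - int n" for n
    using prime_dvd_sum_power_diff[OF p, of "\<lambda>_. 1 :: int" "{..<n}"] by simp
  define d where "d = c mod int p"
  have "d \<ge> 0" using p prime_gt_0_nat d_def by simp
  then have "int p dvd d ^ p - d" using nat_case[of "nat d"] by simp
  moreover have cd: "int p dvd c - d" unfolding d_def by (simp add: mod_eq_dvd_iff)
  moreover have "c ^ p - c = (c ^ p - d ^ p) + (d ^ p - d) - (c - d)" by simp
  ultimately show ?thesis using dvd_power_diff[OF cd] by (metis dvd_add dvd_diff)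
qed

lemma fermat_int_prime_power:
  fixes c :: int
  assumes p: "prime p"
  shows "int p dvd c ^ (p ^ k) - c"
proof (induction k)
  case (Suc k)
  have "c ^ (p ^ Suc k) - c = ((c ^ (p ^ k)) ^ p - c ^ p) + (c ^ p - c)"
    by (simp add: power_mult[symmetric] mult.commute)
  then show ?case using dvd_power_diff[OF Suc] fermat_int[OF p, of c] by (metis dvd_add)
qed simp

definition map_monomials :: "('a \<Rightarrow> 'b) \<Rightarrow> ('a \<Rightarrow>\<^sub>0 'c::comm_monoid_add) \<Rightarrow> 'b \<Rightarrow>\<^sub>0 'c" where
  "map_monomials g x = (\<Sum>\<mu>\<in>Poly_Mapping.keys x. Poly_Mapping.single (g \<mu>) (Poly_Mapping.lookup x \<mu>))"

lemma lookup_sum_single: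
  assumes "finite K"
  shows "Poly_Mapping.lookup (\<Sum>\<mu>\<in>K. Poly_Mapping.single (g \<mu>) (f \<mu>)) \<nu>
       = (\<Sum>\<mu>\<in>K. if g \<mu> = \<nu> then f \<mu> else (0::'c::comm_monoid_add))"
  using assms by (induction K rule: finite_induct) (auto simp: lookup_add lookup_single)

lemma map_monomials_superset:
  assumes "finite K" "Poly_Mapping.keys x \<subseteq> K"
  shows "map_monomials g x = (\<Sum>\<mu>\<in>K. Poly_Mapping.single (g \<mu>) (Poly_Mapping.lookup x \<mu>))"
  unfolding map_monomials_def
  by (rule sum.mono_neutral_left) (use assms in \<open>auto simp: in_keys_iff\<close>)

lemma map_monomials_add: "map_monomials g (x + y) = map_monomials g x + map_monomials g y"
proof -
  define K where "K = Poly_Mapping.keys x \<union> Poly_Mapping.keys y"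
  have K: "finite K" "Poly_Mapping.keys (x + y) \<subseteq> K" unfolding K_def by (simp_all add: keys_add)
  then show ?thesis
    using map_monomials_superset[OF K(1), of x g] map_monomials_superset[OF K(1), of y g]
      map_monomials_superset[OF K(1), of "x + y" g]
    by (simp add: K_def lookup_add single_add sum.distrib)
qed

lemma map_monomials_0 [simp]: "map_monomials g 0 = 0"
  by (simp add: map_monomials_def)

lemma map_monomials_single [simp]:
  "map_monomials g (Poly_Mapping.single \<mu> c) = Poly_Mapping.single (g \<mu>) c"
  by (cases "c = 0") (auto simp: map_monomials_def)

lemma map_monomials_sum: "map_monomials g (\<Sum>i\<in>S. f i) = (\<Sum>i\<in>S. map_monomials g (f i))"
  by (induction S rule: infinite_finite_induct) (auto simp: map_monomials_add)

lemma poly_mapping_sum_single: "(\<Sum>\<mu>\<in>Poly_Mapping.keys x. Poly_Mapping.single \<mu> (Poly_Mapping.lookup x \<mu>)) = x"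
  by (rule poly_mapping_eqI) (subst lookup_sum_single[where g="\<lambda>\<mu>. \<mu>"], auto simp: in_keys_iff)

lemma map_monomials_id: "map_monomials id x = x"
  unfolding map_monomials_def id_def by (rule poly_mapping_sum_single)

lemma map_monomials_comp: "map_monomials f (map_monomials g x) = map_monomials (f \<circ> g) x"
  by (simp add: map_monomials_def[of g] map_monomials_sum) (simp add: map_monomials_def)

lemma map_monomials_mult:
  fixes x y :: "'a::monoid_add \<Rightarrow>\<^sub>0 'c::comm_semiring_1"
  assumes add: "\<And>a b. g (a + b) = g a + g b"
  shows "map_monomials g (x * y) = map_monomials g x * map_monomials g y"
proof -
  have "x * y = (\<Sum>\<mu>\<in>Poly_Mapping.keys x. \<Sum>\<nu>\<in>Poly_Mapping.keys y.
       Poly_Mapping.single (\<mu> + \<nu>) (Poly_Mapping.lookup x \<mu> * Poly_Mapping.lookup y \<nu>))"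
    by (subst (1 2) poly_mapping_sum_single[symmetric]) (simp add: sum_product mult_single)
  then have "map_monomials g (x * y) = (\<Sum>\<mu>\<in>Poly_Mapping.keys x. \<Sum>\<nu>\<in>Poly_Mapping.keys y.
       Poly_Mapping.single (g \<mu> + g \<nu>) (Poly_Mapping.lookup x \<mu> * Poly_Mapping.lookup y \<nu>))"
    by (simp add: map_monomials_sum add)
  also have "\<dots> = map_monomials g x * map_monomials g y"
    by (simp add: map_monomials_def sum_product mult_single)
  finally show ?thesis .
qed

lemma map_monomials_of_nat:
  assumes "g 0 = 0"
  shows "map_monomials g (of_nat n) = of_nat n"
  using map_monomials_single[of g 0 "of_nat n"] assms by (simp flip: single_of_nat)

lemma map_monomials_power:
  fixes x :: "'a::monoid_add \<Rightarrow>\<^sub>0 'c::comm_semiring_1"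
  assumes "\<And>a b. g (a + b) = g a + g b" "g 0 = 0"
  shows "map_monomials g (x ^ n) = map_monomials g x ^ n"
proof -
  have "map_monomials g 1 = (1 :: 'b \<Rightarrow>\<^sub>0 'c)"
    using map_monomials_of_nat[of g 1, OF assms(2)] by simp
  then show ?thesis by (induction n) (simp_all add: map_monomials_mult[OF assms(1)])
qed

lemma lookup_map_monomials:
  "Poly_Mapping.lookup (map_monomials g x) \<nu> =
     (\<Sum>\<mu>\<in>Poly_Mapping.keys x. if g \<mu> = \<nu> then Poly_Mapping.lookup x \<mu> else 0)"
  unfolding map_monomials_def by (rule lookup_sum_single) simp

lemma lookup_map_monomials_inj:
  assumes "inj g"
  shows "Poly_Mapping.lookup (map_monomials g x) (g \<mu>) = Poly_Mapping.lookup x \<mu>"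
proof -
  have "Poly_Mapping.lookup (map_monomials g x) (g \<mu>) =
     (\<Sum>\<nu>\<in>Poly_Mapping.keys x. if \<nu> = \<mu> then Poly_Mapping.lookup x \<nu> else 0)"
    unfolding lookup_map_monomials using assms by (intro sum.cong) (auto dest: injD)
  also have "\<dots> = Poly_Mapping.lookup x \<mu>"
    by (auto simp: in_keys_iff)
  finally show ?thesis .
qed

lemma keys_map_monomials_subset: "Poly_Mapping.keys (map_monomials g x) \<subseteq> g ` Poly_Mapping.keys x"
proof
  fix \<nu> assume "\<nu> \<in> Poly_Mapping.keys (map_monomials g x)"
  then have "(\<Sum>\<mu>\<in>Poly_Mapping.keys x. if g \<mu> = \<nu> then Poly_Mapping.lookup x \<mu> else 0) \<noteq> 0"
    by (simp add: in_keys_iff lookup_map_monomials)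
  then obtain \<mu> where "\<mu> \<in> Poly_Mapping.keys x" "(if g \<mu> = \<nu> then Poly_Mapping.lookup x \<mu> else 0) \<noteq> 0"
    by (rule sum.not_neutral_contains_not_neutral)
  then show "\<nu> \<in> g ` Poly_Mapping.keys x"
    by (metis image_eqI)
qed

lemma keys_map_monomials_inj:
  assumes "inj g"
  shows "Poly_Mapping.keys (map_monomials g x) = g ` Poly_Mapping.keys x"
proof
  show "g ` Poly_Mapping.keys x \<subseteq> Poly_Mapping.keys (map_monomials g x)"
  proof
    fix \<nu> assume "\<nu> \<in> g ` Poly_Mapping.keys x"
    then obtain \<mu> where "\<mu> \<in> Poly_Mapping.keys x" "\<nu> = g \<mu>" by blast
    then show "\<nu> \<in> Poly_Mapping.keys (map_monomials g x)"
      by (simp add: in_keys_iff lookup_map_monomials_inj[OF assms])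
  qed
qed (rule keys_map_monomials_subset)

definition mon_scale :: "nat \<Rightarrow> mon \<Rightarrow> mon" where
  "mon_scale k \<mu> = Poly_Mapping.map (\<lambda>e. of_nat k * e) \<mu>"

definition mon_div :: "nat \<Rightarrow> mon \<Rightarrow> mon" where
  "mon_div s \<mu> = Poly_Mapping.map (\<lambda>e. e / of_nat s) \<mu>"

lemma lookup_map_zero:
  assumes "f 0 = 0"
  shows "Poly_Mapping.lookup (Poly_Mapping.map f x) k = f (Poly_Mapping.lookup x k)"
  using assms by (simp add: Poly_Mapping.map.rep_eq when_def)

lemma lookup_mon_scale [simp]: "Poly_Mapping.lookup (mon_scale k \<mu>) v = of_nat k * Poly_Mapping.lookup \<mu> v"
  unfolding mon_scale_def by (simp add: lookup_map_zero)

lemma lookup_mon_div [simp]: "Poly_Mapping.lookup (mon_div k \<mu>) v = Poly_Mapping.lookup \<mu> v / of_nat k"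
  unfolding mon_div_def by (simp add: lookup_map_zero)

lemma mon_scale_mon_div: "s > 0 \<Longrightarrow> mon_scale s \<circ> mon_div s = id"
  by (rule ext, rule poly_mapping_eqI) simp

lemma mon_div_mon_scale: "s > 0 \<Longrightarrow> mon_div s \<circ> mon_scale s = id"
  by (rule ext, rule poly_mapping_eqI) simp

lemma inj_mon_div: "s > 0 \<Longrightarrow> inj (mon_div s)"
  by (metis inj_on_id inj_on_imageI2 mon_scale_mon_div)

lemma inj_mon_scale: "s > 0 \<Longrightarrow> inj (mon_scale s)"
  by (metis inj_on_id inj_on_imageI2 mon_div_mon_scale)

lemma map_monomials_mon_scale_mon_div:
  "s > 0 \<Longrightarrow> map_monomials (mon_scale s) (map_monomials (mon_div s) x) = x"
  by (simp add: map_monomials_comp mon_scale_mon_div map_monomials_id)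

lemma map_monomials_mon_div_mon_scale:
  "s > 0 \<Longrightarrow> map_monomials (mon_div s) (map_monomials (mon_scale s) x) = x"
  by (simp add: map_monomials_comp mon_div_mon_scale map_monomials_id)

lemma rootR_eq_map_monomials: "rootR s = map_monomials (mon_div s)"
  by (rule ext) (simp add: rootR_def map_monomials_def mon_div_def)

lemma single_power:
  "(Poly_Mapping.single \<mu> c :: R) ^ k = Poly_Mapping.single (mon_scale k \<mu>) (c ^ k)"
proof (induction k)
  case 0
  have "mon_scale 0 \<mu> = 0" by (rule poly_mapping_eqI) simp
  then show ?case by simp
next
  case (Suc k)
  have "\<mu> + mon_scale k \<mu> = mon_scale (Suc k) \<mu>"
    by (rule poly_mapping_eqI) (simp add: lookup_add algebra_simps)
  then show ?case using Suc by (simp add: mult_single)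
qed

lemma lookup_of_nat_mult: "Poly_Mapping.lookup ((of_nat n :: R) * z) \<mu> = int n * Poly_Mapping.lookup z \<mu>"
proof -
  have "(of_nat n :: R) * z = Poly_Mapping.map (\<lambda>c. int n * c) z"
    by (simp add: mult_map_scale_conv_mult flip: single_of_nat)
  then show ?thesis by (simp add: lookup_map_zero)
qed

lemma lookup_dvd_if_of_nat_dvd:
  assumes "(of_nat p :: R) dvd x"
  shows "int p dvd Poly_Mapping.lookup x \<mu>"
  using assms by (auto simp: lookup_of_nat_mult)

lemma eq_of_nat_mult_map_div:
  assumes "\<And>\<mu>. int p dvd Poly_Mapping.lookup x \<mu>"
  shows "x = (of_nat p :: R) * Poly_Mapping.map (\<lambda>c. c div int p) x"
  by (rule poly_mapping_eqI) (simp add: lookup_of_nat_mult lookup_map_zero assms)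

lemma of_nat_dvd_single:
  assumes "int p dvd c"
  shows "(of_nat p :: R) dvd Poly_Mapping.single \<mu> c"
proof -
  obtain d where "c = int p * d" using assms by blast
  then have "Poly_Mapping.single \<mu> c = (of_nat p :: R) * Poly_Mapping.single \<mu> d"
    by (simp add: mult_single flip: single_of_nat)
  then show ?thesis by simp
qed

lemma of_nat_mult_eq_0_imp_eq_0:
  assumes "p > 0" "(of_nat p :: R) * x = 0"
  shows "x = 0"
proof (rule poly_mapping_eqI)
  fix \<mu>
  have "int p * Poly_Mapping.lookup x \<mu> = 0" using assms(2) lookup_of_nat_mult[of p x \<mu>] by simp
  then show "Poly_Mapping.lookup x \<mu> = Poly_Mapping.lookup 0 \<mu>" using assms(1) by simp
qed

text \<open>Modulo p, the Frobenius of R only multiplies exponents, by Fermat's little theorem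
  applied to the coefficients.\<close>

lemma frobenius_cong_mon_scale:
  assumes p: "prime p"
  shows "(of_nat p :: R) dvd x ^ (p ^ k) - map_monomials (mon_scale (p ^ k)) x"
proof -
  let ?c = "Poly_Mapping.lookup x"
  let ?S = "\<Sum>\<mu>\<in>Poly_Mapping.keys x. Poly_Mapping.single \<mu> (?c \<mu>) ^ (p ^ k)"
  have "(of_nat p :: R) dvd (\<Sum>\<mu>\<in>Poly_Mapping.keys x. Poly_Mapping.single \<mu> (?c \<mu>)) ^ (p ^ k) - ?S"
    by (rule prime_dvd_sum_power_prime_power_diff[OF p])
  then have frob: "(of_nat p :: R) dvd x ^ (p ^ k) - ?S"
    by (simp only: poly_mapping_sum_single)
  have "?S - map_monomials (mon_scale (p ^ k)) x
     = (\<Sum>\<mu>\<in>Poly_Mapping.keys x. Poly_Mapping.single (mon_scale (p ^ k) \<mu>) (?c \<mu> ^ (p ^ k) - ?c \<mu>))"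
    unfolding map_monomials_def single_power sum_subtractf[symmetric] single_diff ..
  also have "(of_nat p :: R) dvd \<dots>"
    by (intro dvd_sum of_nat_dvd_single fermat_int_prime_power[OF p])
  finally show ?thesis by (rule dvd_diff_trans[OF frob])
qed

lemma teich_cong_mod_p:
  assumes p: "prime p"
  shows "(of_nat p :: R) dvd teich p n a - a"
proof -
  have "p ^ n > 0" using p prime_gt_0_nat by simp
  then have "map_monomials (mon_scale (p ^ n)) (rootR (p ^ n) a) = a"
    by (simp add: rootR_eq_map_monomials map_monomials_mon_scale_mon_div)
  then show ?thesis using frobenius_cong_mon_scale[OF p, of "rootR (p ^ n) a" n] by (simp add: teich_def)
qed

lemma root_power_prime_cong_mod_p:
  assumes p: "prime p"
  shows "(of_nat p :: R) dvd (rootR (p ^ Suc n) a) ^ p - rootR (p ^ n) a"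
proof -
  have "p > 0" using p prime_gt_0_nat by simp
  then have "of_nat p * (e / of_nat (p ^ Suc n)) = e / of_nat (p ^ n)" for e :: rat
    by simp
  then have "mon_scale p \<circ> mon_div (p ^ Suc n) = mon_div (p ^ n)"
    by (intro ext poly_mapping_eqI) (simp only: o_def lookup_mon_scale lookup_mon_div)
  then have "map_monomials (mon_scale p) (rootR (p ^ Suc n) a) = rootR (p ^ n) a"
    by (simp add: rootR_eq_map_monomials map_monomials_comp)
  then show ?thesis using frobenius_cong_mon_scale[OF p, of "rootR (p ^ Suc n) a" 1] by simp
qed

definition reduced :: "nat \<Rightarrow> R \<Rightarrow> bool" where
  "reduced p x \<longleftrightarrow> (\<forall>\<mu>. 0 \<le> Poly_Mapping.lookup x \<mu> \<and> Poly_Mapping.lookup x \<mu> < int p)"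

lemma reduced_eqI:
  assumes "reduced p x" "reduced p y" "(of_nat p :: R) dvd x - y"
  shows "x = y"
proof (rule poly_mapping_eqI)
  fix \<mu>
  have "int p dvd Poly_Mapping.lookup x \<mu> - Poly_Mapping.lookup y \<mu>"
    using lookup_dvd_if_of_nat_dvd[OF assms(3), of \<mu>] by (simp add: lookup_minus)
  then have "Poly_Mapping.lookup x \<mu> mod int p = Poly_Mapping.lookup y \<mu> mod int p"
    by (simp only: mod_eq_dvd_iff)
  moreover have "Poly_Mapping.lookup x \<mu> mod int p = Poly_Mapping.lookup x \<mu>"
    "Poly_Mapping.lookup y \<mu> mod int p = Poly_Mapping.lookup y \<mu>"
    using assms(1,2) unfolding reduced_def by (simp_all add: mod_pos_pos_trivial)
  ultimately show "Poly_Mapping.lookup x \<mu> = Poly_Mapping.lookup y \<mu>" by simp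
qed

lemma reduced_modp: "p > 0 \<Longrightarrow> reduced p (modp p x)"
  by (simp add: reduced_def modp_def lookup_map_zero)

lemma of_nat_dvd_diff_modp: "(of_nat p :: R) dvd x - modp p x"
proof -
  have "x = modp p x + (of_nat p :: R) * Poly_Mapping.map (\<lambda>c. c div int p) x"
    by (rule poly_mapping_eqI) (simp add: modp_def lookup_of_nat_mult lookup_map_zero lookup_add)
  then show ?thesis by (metis add_diff_cancel_left' dvd_triv_left)
qed

lemma reduced_map_monomials:
  assumes "inj g" "reduced p x" "p > 0"
  shows "reduced p (map_monomials g x)"
  unfolding reduced_def
proof
  fix \<nu>
  show "0 \<le> Poly_Mapping.lookup (map_monomials g x) \<nu> \<and> Poly_Mapping.lookup (map_monomials g x) \<nu> < int p"
  proof (cases "\<nu> \<in> g ` Poly_Mapping.keys x")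
    case True
    then obtain \<mu> where "\<nu> = g \<mu>" by auto
    then show ?thesis using assms(2) unfolding reduced_def by (simp add: lookup_map_monomials_inj[OF assms(1)])
  next
    case False
    then have "\<nu> \<notin> Poly_Mapping.keys (map_monomials g x)"
      using keys_map_monomials_subset[of g x] by blast
    then have "Poly_Mapping.lookup (map_monomials g x) \<nu> = 0" by (simp add: in_keys_iff)
    then show ?thesis using assms(3) by simp
  qed
qed

definition in_pi_ideal :: "'a::comm_ring_1 poly \<Rightarrow> nat \<Rightarrow> 'a poly \<Rightarrow> bool" where
  "in_pi_ideal f e A \<longleftrightarrow> (\<exists>g h. A = f * g + monom 1 e * h)"

lemma cong_pi_iff: "cong_pi p q t n A B \<longleftrightarrow> in_pi_ideal (frel p q t n) (Suc n) (A - B)"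
  by (simp add: cong_pi_def in_pi_ideal_def)

lemma in_pi_ideal_add:
  assumes "in_pi_ideal f e A" "in_pi_ideal f e B" shows "in_pi_ideal f e (A + B)"
proof -
  obtain g h g' h' where "A = f * g + monom 1 e * h" "B = f * g' + monom 1 e * h'"
    using assms unfolding in_pi_ideal_def by blast
  then have "A + B = f * (g + g') + monom 1 e * (h + h')" by (simp add: algebra_simps)
  then show ?thesis unfolding in_pi_ideal_def by blast
qed

lemma in_pi_ideal_diff:
  assumes "in_pi_ideal f e A" "in_pi_ideal f e B" shows "in_pi_ideal f e (A - B)"
proof -
  obtain g h g' h' where "A = f * g + monom 1 e * h" "B = f * g' + monom 1 e * h'"
    using assms unfolding in_pi_ideal_def by blast
  then have "A - B = f * (g - g') + monom 1 e * (h - h')" by (simp add: algebra_simps)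
  then show ?thesis unfolding in_pi_ideal_def by blast
qed

lemma in_pi_ideal_mult_left: "in_pi_ideal f e A \<Longrightarrow> in_pi_ideal f e (B * A)"
  unfolding in_pi_ideal_def
proof (elim exE)
  fix g h assume "A = f * g + monom 1 e * h"
  then have "B * A = f * (B * g) + monom 1 e * (B * h)" by (simp add: algebra_simps)
  then show "\<exists>g h. B * A = f * g + monom 1 e * h" by blast
qed

lemma in_pi_ideal_mult_right: "in_pi_ideal f e A \<Longrightarrow> in_pi_ideal f e (A * B)"
  by (metis mult.commute in_pi_ideal_mult_left)

lemma in_pi_ideal_generator: "in_pi_ideal f e (f * g)"
  unfolding in_pi_ideal_def by (rule exI[of _ g], rule exI[of _ 0]) simp

lemma in_pi_ideal_pi_power: "in_pi_ideal f e (monom 1 e * h)"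
  unfolding in_pi_ideal_def by (rule exI[of _ 0], rule exI[of _ h]) simp

lemma in_pi_ideal_if_dvd: "monom 1 e dvd A \<Longrightarrow> in_pi_ideal f e A"
  by (auto intro: in_pi_ideal_pi_power)

lemma in_pi_ideal_monom: "e \<le> k \<Longrightarrow> in_pi_ideal f e (monom c k)"
proof (rule in_pi_ideal_if_dvd)
  assume "e \<le> k"
  then have "monom c k = monom 1 e * monom c (k - e)" by (simp add: mult_monom)
  then show "monom 1 e dvd monom c k" by simp
qed

lemma in_pi_ideal_mono:
  assumes "e' \<le> e" "in_pi_ideal f e A" shows "in_pi_ideal f e' A"
proof -
  obtain g h where "A = f * g + monom 1 e * h" using assms(2) unfolding in_pi_ideal_def by blast
  moreover have "monom 1 e = monom 1 e' * (monom 1 (e - e') :: 'a poly)"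
    using assms(1) by (simp add: mult_monom)
  ultimately have "A = f * g + monom 1 e' * (monom 1 (e - e') * h)"
    by (simp add: mult.assoc)
  then show ?thesis unfolding in_pi_ideal_def by blast
qed

lemma in_pi_ideal_mult:
  assumes "in_pi_ideal f e1 A" "in_pi_ideal f e2 B" shows "in_pi_ideal f (e1 + e2) (A * B)"
proof -
  obtain g h g' h' where A: "A = f * g + monom 1 e1 * h" and B: "B = f * g' + monom 1 e2 * h'"
    using assms unfolding in_pi_ideal_def by blast
  have "A * B = f * (g * B + h * monom 1 e1 * g') + monom 1 (e1 + e2) * (h * h')"
    unfolding A B by (simp add: algebra_simps mult_monom)
  then show ?thesis unfolding in_pi_ideal_def by blast
qed

lemma in_pi_ideal_0: "in_pi_ideal f e 0"
  using in_pi_ideal_generator[of f e 0] by simp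

lemma in_pi_ideal_sum: "(\<And>i. i \<in> S \<Longrightarrow> in_pi_ideal f e (F i)) \<Longrightarrow> in_pi_ideal f e (\<Sum>i\<in>S. F i)"
  by (induction S rule: infinite_finite_induct) (auto intro: in_pi_ideal_add in_pi_ideal_0)

lemma in_pi_ideal_monom_const: "in_pi_ideal f e [:c:] \<Longrightarrow> in_pi_ideal f e (monom c i)"
  using in_pi_ideal_mult_right[of f e "[:c:]" "monom 1 i"] by (simp add: monom_altdef)

text \<open>This is why Teichmueller lifts are well defined modulo pi^(k+1): since p lies in (f, pi),
  raising a congruence modulo p to the p-th power improves it by one power of pi.\<close>

lemma in_pi_ideal_power_prime_power_diff:
  fixes u v :: "'a::comm_ring_1"
  assumes p: "prime p" and p_in: "in_pi_ideal f 1 [:of_nat p:]" and uv: "of_nat p dvd u - v"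
  shows "in_pi_ideal f (Suc k) ([:u ^ (p ^ k):] - [:v ^ (p ^ k):])"
proof (induction k)
  case 0
  obtain z where "u - v = of_nat p * z" using uv by blast
  then have "[:u ^ (p ^ 0):] - [:v ^ (p ^ 0):] = [:of_nat p:] * [:z:]" by (simp add: diff_pCons)
  then show ?case using in_pi_ideal_mult_right[OF p_in, of "[:z:]"] by simp
next
  case (Suc k)
  define V where "V = [:v ^ (p ^ k):]"
  define D where "D = [:u ^ (p ^ k):] - V"
  obtain w where w: "(V + D) ^ p = V ^ p + D ^ p + of_nat p * D * w"
    using binomial_prime_remainder[OF p] by blast
  have "[:u ^ (p ^ Suc k):] - [:v ^ (p ^ Suc k):] = (V + D) ^ p - V ^ p"
    unfolding V_def D_def by (simp add: poly_const_pow power_mult[symmetric] mult.commute)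
  also have "\<dots> = D ^ p + [:of_nat p:] * D * w"
    using w by (simp add: of_nat_poly)
  finally have eq: "[:u ^ (p ^ Suc k):] - [:v ^ (p ^ Suc k):] = D ^ p + [:of_nat p:] * D * w" .
  obtain p' where p': "p = Suc (Suc p')" using prime_ge_2_nat[OF p] by (metis add_2_eq_Suc le_Suc_ex)
  have "in_pi_ideal f (Suc k + Suc k) (D * D * D ^ p')"
    using in_pi_ideal_mult_right[OF in_pi_ideal_mult[OF Suc Suc]] unfolding D_def V_def .
  moreover have "D ^ p = D * D * D ^ p'" unfolding p' by (simp add: mult.assoc)
  ultimately have "in_pi_ideal f (Suc (Suc k)) (D ^ p)"
    using in_pi_ideal_mono[of "Suc (Suc k)" "Suc k + Suc k"] by simp
  moreover have "in_pi_ideal f (1 + Suc k) ([:of_nat p:] * D * w)"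
    using in_pi_ideal_mult_right[OF in_pi_ideal_mult[OF p_in Suc]] unfolding D_def V_def .
  ultimately show ?case unfolding eq by (simp add: in_pi_ideal_add)
qed

section \<open>Uniqueness of Teichmueller expansions\<close>

abbreviation omega_coeff :: "nat \<Rightarrow> int \<Rightarrow> nat \<Rightarrow> R" where
  "omega_coeff q t i \<equiv> term_R (Poly_Mapping.single (Om i) ((of_nat q :: rat) powi t))"

lemma coeff_frel_0: "coeff (frel p q t n) 0 = of_nat p"
  unfolding frel_def by (simp add: coeff_sum)

lemma frel_Suc: "frel p q t (Suc n) = frel p q t n - monom (omega_coeff q t (Suc n)) (Suc n)"
  unfolding frel_def by (simp add: algebra_simps)

lemma frel_split:
  assumes "i \<le> N"
  shows "frel p q t N = frel p q t i - (\<Sum>j\<in>{Suc i..N}. monom (omega_coeff q t j) j)"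
  using assms
proof (induction N)
  case (Suc N)
  then show ?case by (cases "i = Suc N") (simp_all add: frel_Suc algebra_simps)
qed simp

lemma of_nat_in_pi_ideal_frel: "in_pi_ideal (frel p q t n) 1 [:of_nat p:]"
proof -
  have "[:of_nat p:] = frel p q t n * 1 + (\<Sum>i\<in>{1..n}. monom (omega_coeff q t i) i)"
    unfolding frel_def by simp
  moreover have "in_pi_ideal (frel p q t n) 1 (\<Sum>i\<in>{1..n}. monom (omega_coeff q t i) i)"
    by (intro in_pi_ideal_sum in_pi_ideal_monom) simp
  ultimately show ?thesis using in_pi_ideal_add[OF in_pi_ideal_generator[of "frel p q t n" 1 1]] by simp
qed

lemma in_pi_ideal_frel_mono:
  assumes "i \<le> N" "in_pi_ideal (frel p q t N) (Suc N) A"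
  shows "in_pi_ideal (frel p q t i) (Suc i) A"
proof -
  obtain g h where gh: "A = frel p q t N * g + monom 1 (Suc i) * h"
    using in_pi_ideal_mono[OF _ assms(2), of "Suc i"] assms(1) unfolding in_pi_ideal_def by auto
  define S where "S = (\<Sum>j\<in>{Suc i..N}. monom (omega_coeff q t j) j)"
  have S: "in_pi_ideal (frel p q t i) (Suc i) S"
    unfolding S_def by (intro in_pi_ideal_sum in_pi_ideal_monom) simp
  have "A = frel p q t i * g - S * g + monom 1 (Suc i) * h"
    unfolding gh frel_split[OF assms(1)] S_def by (simp only: left_diff_distrib)
  moreover have "in_pi_ideal (frel p q t i) (Suc i) (frel p q t i * g - S * g + monom 1 (Suc i) * h)"
    by (intro in_pi_ideal_add in_pi_ideal_diff in_pi_ideal_generator in_pi_ideal_pi_power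
        in_pi_ideal_mult_right[OF S])
  ultimately show ?thesis by simp
qed

lemma teich_Suc_cong:
  assumes p: "prime p"
  shows "in_pi_ideal (frel p q t n) (Suc n) ([:teich p (Suc n) a:] - [:teich p n a:])"
  using in_pi_ideal_power_prime_power_diff[OF p of_nat_in_pi_ideal_frel root_power_prime_cong_mod_p[OF p]]
  by (simp add: teich_def power_mult[symmetric])

lemma teich_cong:
  assumes p: "prime p" and "i \<le> N"
  shows "in_pi_ideal (frel p q t i) (Suc i) ([:teich p N a:] - [:teich p i a:])"
  using assms(2)
proof (induction N)
  case (Suc N)
  show ?case
  proof (cases "i = Suc N")
    case False
    then have iN: "i \<le> N" using Suc.prems by simp
    have "in_pi_ideal (frel p q t i) (Suc i)
        (([:teich p (Suc N) a:] - [:teich p N a:]) + ([:teich p N a:] - [:teich p i a:]))"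
      by (intro in_pi_ideal_add in_pi_ideal_frel_mono[OF iN teich_Suc_cong[OF p]] Suc.IH[OF iN])
    then show ?thesis by simp
  qed (simp add: in_pi_ideal_0)
qed (simp add: in_pi_ideal_0)

lemma of_nat_dvd_coeff_0_if_in_pi_ideal:
  assumes "in_pi_ideal (frel p q t n) e D" "e \<ge> 1"
  shows "(of_nat p :: R) dvd coeff D 0"
proof -
  obtain g h where "D = frel p q t n * g + monom 1 e * h" using assms(1) unfolding in_pi_ideal_def by blast
  then have "coeff D 0 = of_nat p * coeff g 0"
    using assms(2) by (simp add: coeff_mult_0 coeff_frel_0 coeff_monom)
  then show ?thesis by simp
qed

text \<open>Dividing by pi uses that R has no p-torsion: the constant term p * g_0 of the right-hand side
  vanishes, so pi divides the cofactor g of the relation.\<close>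

lemma in_pi_ideal_frel_pCons_0:
  assumes p: "p > 0" and Y: "in_pi_ideal (frel p q t (Suc n)) (Suc (Suc n)) (pCons 0 Y)"
  shows "in_pi_ideal (frel p q t n) (Suc n) Y"
proof -
  obtain g h where gh: "pCons 0 Y = frel p q t (Suc n) * g + monom 1 (Suc (Suc n)) * h"
    using Y unfolding in_pi_ideal_def by blast
  have "coeff (pCons 0 Y) 0 = of_nat p * coeff g 0"
    unfolding gh by (simp add: coeff_mult_0 coeff_frel_0 coeff_monom)
  then have "coeff g 0 = 0" using of_nat_mult_eq_0_imp_eq_0[OF p] by simp
  then obtain g' where g': "g = pCons 0 g'" by (cases g) auto
  have "pCons 0 Y = pCons 0 (frel p q t (Suc n) * g' + monom 1 (Suc n) * h)"
    unfolding gh g' by (simp add: monom_Suc)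
  then have "Y = frel p q t n * g' - monom (omega_coeff q t (Suc n)) (Suc n) * g' + monom 1 (Suc n) * h"
    by (simp add: frel_Suc algebra_simps)
  moreover have "in_pi_ideal (frel p q t n) (Suc n)
      (frel p q t n * g' - monom (omega_coeff q t (Suc n)) (Suc n) * g' + monom 1 (Suc n) * h)"
    by (intro in_pi_ideal_add in_pi_ideal_diff in_pi_ideal_generator in_pi_ideal_pi_power
        in_pi_ideal_mult_right in_pi_ideal_monom) simp
  ultimately show ?thesis by simp
qed

lemma sum_pCons_0: "(\<Sum>i\<in>S. pCons 0 (f i)) = pCons 0 (\<Sum>i\<in>S. f i)"
  by (induction S rule: infinite_finite_induct) (simp_all add: add_pCons[symmetric])

definition teich_expansion :: "nat \<Rightarrow> nat \<Rightarrow> (nat \<Rightarrow> R) \<Rightarrow> R poly" where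
  "teich_expansion p n a = (\<Sum>i\<le>n. monom (teich p n (a i)) i)"

lemma teich_expansion_diff:
  "teich_expansion p n a - teich_expansion p n b = (\<Sum>i\<le>n. monom (teich p n (a i) - teich p n (b i)) i)"
  unfolding teich_expansion_def by (simp only: sum_subtractf[symmetric] diff_monom)

lemma reduced_eq_if_teich_cong_mod_p:
  assumes p: "prime p" and "reduced p a" "reduced p b"
    and "(of_nat p :: R) dvd teich p n a - teich p n b"
  shows "a = b"
proof -
  have "(of_nat p :: R) dvd a - teich p n b"
    using dvd_diff_trans[OF _ assms(4)] teich_cong_mod_p[OF p, of n a] by (metis dvd_minus_iff minus_diff_eq)
  then have "(of_nat p :: R) dvd a - b"
    using dvd_diff_trans teich_cong_mod_p[OF p, of n b] by blast
  then show ?thesis using assms(2,3) by (rule reduced_eqI[rotated 2])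
qed

lemma teich_expansion_digit_0:
  assumes p: "prime p" and "reduced p (a 0)" "reduced p (b 0)"
    and "in_pi_ideal (frel p q t n) (Suc n) (teich_expansion p n a - teich_expansion p n b)"
  shows "a 0 = b 0"
proof -
  have "(of_nat p :: R) dvd coeff (teich_expansion p n a - teich_expansion p n b) 0"
    using assms(4) by (rule of_nat_dvd_coeff_0_if_in_pi_ideal) simp
  then have "(of_nat p :: R) dvd teich p n (a 0) - teich p n (b 0)"
    by (simp add: teich_expansion_diff coeff_sum coeff_monom)
  then show ?thesis using reduced_eq_if_teich_cong_mod_p[OF p assms(2,3)] by simp
qed

text \<open>Once the first digits agree, the difference is divisible by pi; after dividing by pi, the lifts
  modulo pi^(n+2) may be replaced by the lifts modulo pi^(n+1) of the remaining digits.\<close>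

lemma teich_expansion_shift:
  assumes p: "prime p" and a0: "a 0 = b 0"
    and D: "in_pi_ideal (frel p q t (Suc n)) (Suc (Suc n))
              (teich_expansion p (Suc n) a - teich_expansion p (Suc n) b)"
  shows "in_pi_ideal (frel p q t n) (Suc n) (teich_expansion p n (a \<circ> Suc) - teich_expansion p n (b \<circ> Suc))"
proof -
  define d where "d i = teich p (Suc n) (a i) - teich p (Suc n) (b i)" for i
  define Y where "Y = (\<Sum>i\<le>n. monom (d (Suc i)) i)"
  have "teich_expansion p (Suc n) a - teich_expansion p (Suc n) b
      = monom (d 0) 0 + (\<Sum>i\<le>n. monom (d (Suc i)) (Suc i))"
    unfolding teich_expansion_diff d_def by (rule sum.atMost_Suc_shift)
  also have "\<dots> = pCons 0 Y"
    using a0 unfolding Y_def d_def monom_Suc by (simp add: sum_pCons_0)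
  finally have Y: "in_pi_ideal (frel p q t n) (Suc n) Y"
    using in_pi_ideal_frel_pCons_0[of p] D p prime_gt_0_nat by simp
  have "in_pi_ideal (frel p q t n) (Suc n)
      (Y - (teich_expansion p n (a \<circ> Suc) - teich_expansion p n (b \<circ> Suc)))"
    unfolding Y_def teich_expansion_diff sum_subtractf[symmetric] diff_monom
  proof (intro in_pi_ideal_sum in_pi_ideal_monom_const)
    fix i
    have e: "[:d (Suc i) - (teich p n ((a \<circ> Suc) i) - teich p n ((b \<circ> Suc) i)):]
      = ([:teich p (Suc n) (a (Suc i)):] - [:teich p n (a (Suc i)):])
        - ([:teich p (Suc n) (b (Suc i)):] - [:teich p n (b (Suc i)):])"
      unfolding d_def by (simp add: diff_pCons)
    show "in_pi_ideal (frel p q t n) (Suc n)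
        [:d (Suc i) - (teich p n ((a \<circ> Suc) i) - teich p n ((b \<circ> Suc) i)):]"
      unfolding e by (intro in_pi_ideal_diff teich_Suc_cong[OF p])
  qed
  then show ?thesis using in_pi_ideal_diff[OF Y] by fastforce
qed

lemma teich_expansion_unique:
  assumes p: "prime p"
    and "\<forall>i\<le>n. reduced p (a i) \<and> reduced p (b i)"
    and "in_pi_ideal (frel p q t n) (Suc n) (teich_expansion p n a - teich_expansion p n b)"
  shows "\<forall>i\<le>n. a i = b i"
  using assms(2,3)
proof (induction n arbitrary: a b)
  case 0
  then show ?case using teich_expansion_digit_0[OF p] by simp
next
  case (Suc n)
  have a0: "a 0 = b 0"
    using Suc.prems by (intro teich_expansion_digit_0[OF p]) auto
  have tail: "\<forall>i\<le>n. (a \<circ> Suc) i = (b \<circ> Suc) i"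
  proof (rule Suc.IH)
    show "\<forall>i\<le>n. reduced p ((a \<circ> Suc) i) \<and> reduced p ((b \<circ> Suc) i)"
      using Suc.prems(1) by simp
    show "in_pi_ideal (frel p q t n) (Suc n) (teich_expansion p n (a \<circ> Suc) - teich_expansion p n (b \<circ> Suc))"
      by (rule teich_expansion_shift[OF p a0 Suc.prems(2)])
  qed
  show ?case
  proof (intro allI impI)
    fix i assume "i \<le> Suc n"
    then show "a i = b i" using a0 tail by (cases i) auto
  qed
qed

text \<open>Admissibility records that only omega_1, ..., omega_N occur, with exponents in Z[1/p];
  this is what lets Q_n be evaluated in L_m-algebras for n <= m.\<close>

definition admissible_mon :: "nat \<Rightarrow> nat \<Rightarrow> mon \<Rightarrow> bool" where
  "admissible_mon p N \<mu> \<longleftrightarrow> (\<forall>v. (Poly_Mapping.lookup \<mu> v \<noteq> 0 \<longrightarrow> (\<forall>i. v = Om i \<longrightarrow> 1 \<le> i \<and> i \<le> N))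
      \<and> padic_exp p (Poly_Mapping.lookup \<mu> v))"

definition admissible :: "nat \<Rightarrow> nat \<Rightarrow> R \<Rightarrow> bool" where
  "admissible p N x \<longleftrightarrow> (\<forall>\<mu>\<in>Poly_Mapping.keys x. admissible_mon p N \<mu>)"

definition admissible_poly :: "nat \<Rightarrow> nat \<Rightarrow> R poly \<Rightarrow> bool" where
  "admissible_poly p N A \<longleftrightarrow> (\<forall>j. admissible p N (coeff A j))"

lemma padic_exp_0 [simp]: "padic_exp p 0"
  unfolding padic_exp_def by (auto intro: exI[of _ 0])

lemma padic_exp_1 [simp]: "padic_exp p 1"
  unfolding padic_exp_def by (auto intro: exI[of _ 0])

lemma padic_exp_add:
  assumes "padic_exp p a" "padic_exp p b" shows "padic_exp p (a + b)"
proof -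
  obtain k l where k: "a * of_nat p ^ k \<in> \<int>" and l: "b * of_nat p ^ l \<in> \<int>"
    and "0 \<le> a" "0 \<le> b" using assms unfolding padic_exp_def by blast
  moreover have "(a + b) * of_nat p ^ (k + l) = (a * of_nat p ^ k) * of_nat p ^ l + (b * of_nat p ^ l) * of_nat p ^ k"
    by (simp add: algebra_simps power_add)
  ultimately show ?thesis unfolding padic_exp_def
    by (metis Ints_add Ints_mult Ints_power Ints_of_nat add_nonneg_nonneg)
qed

lemma padic_exp_div_power:
  assumes "p > 0" "padic_exp p a" shows "padic_exp p (a / of_nat (p ^ n))"
proof -
  obtain k where k: "a * of_nat p ^ k \<in> \<int>" and "0 \<le> a" using assms unfolding padic_exp_def by blast
  moreover have "a / of_nat (p ^ n) * of_nat p ^ (k + n) = a * of_nat p ^ k"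
    using assms(1) by (simp add: power_add field_simps)
  ultimately show ?thesis unfolding padic_exp_def by (metis divide_nonneg_nonneg of_nat_0_le_iff)
qed

lemma padic_exp_of_nat_mult:
  assumes "padic_exp p a" shows "padic_exp p (of_nat k * a)"
proof -
  obtain l where "a * of_nat p ^ l \<in> \<int>" "0 \<le> a" using assms unfolding padic_exp_def by blast
  then show ?thesis unfolding padic_exp_def
    by (metis Ints_mult Ints_of_nat mult.assoc mult_nonneg_nonneg of_nat_0_le_iff)
qed

lemma padic_exp_powi:
  assumes "q = p ^ r" "p > 0"
  shows "padic_exp p ((of_nat q :: rat) powi t)"
proof (cases "t \<ge> 0")
  case True
  then have "(of_nat q :: rat) powi t = of_nat (q ^ nat t)"
    by (simp add: power_int_def)
  then show ?thesis unfolding padic_exp_def by (metis Ints_of_nat mult.right_neutral of_nat_0_le_iff power_0)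
next
  case False
  then have "(of_nat q :: rat) powi t = 1 / of_nat (p ^ (r * nat (- t)))"
    using assms by (simp add: power_int_def power_mult divide_inverse power_inverse)
  then show ?thesis using padic_exp_div_power[OF assms(2) padic_exp_1] by simp
qed

lemma admissible_mon_0 [simp]: "admissible_mon p N 0"
  unfolding admissible_mon_def by simp

lemma admissible_mon_add:
  assumes "admissible_mon p N a" "admissible_mon p N b" shows "admissible_mon p N (a + b)"
  unfolding admissible_mon_def
proof
  fix v
  have a: "Poly_Mapping.lookup a v \<noteq> 0 \<longrightarrow> (\<forall>i. v = Om i \<longrightarrow> 1 \<le> i \<and> i \<le> N)"
       "padic_exp p (Poly_Mapping.lookup a v)" using assms(1) unfolding admissible_mon_def by auto
  have b: "Poly_Mapping.lookup b v \<noteq> 0 \<longrightarrow> (\<forall>i. v = Om i \<longrightarrow> 1 \<le> i \<and> i \<le> N)"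
       "padic_exp p (Poly_Mapping.lookup b v)" using assms(2) unfolding admissible_mon_def by auto
  show "(Poly_Mapping.lookup (a + b) v \<noteq> 0 \<longrightarrow> (\<forall>i. v = Om i \<longrightarrow> 1 \<le> i \<and> i \<le> N))
      \<and> padic_exp p (Poly_Mapping.lookup (a + b) v)"
    using a b padic_exp_add[OF a(2) b(2)] by (auto simp: lookup_add)
qed

lemma admissible_mon_scale: "admissible_mon p N \<mu> \<Longrightarrow> admissible_mon p N (mon_scale k \<mu>)"
  unfolding admissible_mon_def by (auto intro: padic_exp_of_nat_mult)

lemma admissible_mon_div: "p > 0 \<Longrightarrow> admissible_mon p N \<mu> \<Longrightarrow> admissible_mon p N (mon_div (p ^ n) \<mu>)"
  unfolding admissible_mon_def using padic_exp_div_power by (auto simp del: of_nat_power)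

lemma admissible_add: "admissible p N x \<Longrightarrow> admissible p N y \<Longrightarrow> admissible p N (x + y)"
  unfolding admissible_def using keys_add[of x y] by (auto simp del: keys_add)

lemma admissible_diff: "admissible p N x \<Longrightarrow> admissible p N y \<Longrightarrow> admissible p N (x - y)"
  unfolding diff_conv_add_uminus admissible_def using keys_add[of x "- y"] by (auto simp del: keys_add)

lemma admissible_mult: "admissible p N x \<Longrightarrow> admissible p N y \<Longrightarrow> admissible p N (x * y)"
  unfolding admissible_def
proof
  fix \<mu> assume "\<forall>\<mu>\<in>Poly_Mapping.keys x. admissible_mon p N \<mu>" "\<forall>\<mu>\<in>Poly_Mapping.keys y. admissible_mon p N \<mu>"
    and "\<mu> \<in> Poly_Mapping.keys (x * y)"
  moreover obtain a b where "\<mu> = a + b" "a \<in> Poly_Mapping.keys x" "b \<in> Poly_Mapping.keys y"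
    using keys_mult[of x y] \<open>\<mu> \<in> Poly_Mapping.keys (x * y)\<close> by blast
  ultimately show "admissible_mon p N \<mu>" using admissible_mon_add by simp
qed

lemma admissible_single: "admissible_mon p N \<mu> \<Longrightarrow> admissible p N (Poly_Mapping.single \<mu> c)"
  unfolding admissible_def by simp

lemma admissible_0 [simp]: "admissible p N 0"
  unfolding admissible_def by simp

lemma admissible_sum: "(\<And>i. i \<in> S \<Longrightarrow> admissible p N (f i)) \<Longrightarrow> admissible p N (\<Sum>i\<in>S. f i)"
  by (induction S rule: infinite_finite_induct) (auto intro: admissible_add)

lemma admissible_power: "admissible p N x \<Longrightarrow> admissible p N (x ^ n)"
  by (induction n) (auto intro: admissible_mult admissible_single simp flip: single_one)

lemma admissible_map_monomials:
  "(\<And>\<mu>. admissible_mon p N \<mu> \<Longrightarrow> admissible_mon p N (g \<mu>)) \<Longrightarrow> admissible p N x \<Longrightarrow> admissible p N (map_monomials g x)"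
  unfolding admissible_def using keys_map_monomials_subset[of g x] by auto

lemma admissible_map: "admissible p N x \<Longrightarrow> admissible p N (Poly_Mapping.map f x)"
  unfolding admissible_def by (auto simp: in_keys_iff Poly_Mapping.map.rep_eq when_def)

lemma admissible_teich: "p > 0 \<Longrightarrow> admissible p N x \<Longrightarrow> admissible p N (teich p n x)"
  unfolding teich_def rootR_eq_map_monomials
  by (intro admissible_power admissible_map_monomials admissible_mon_div)

lemma admissible_omega_coeff:
  assumes "q = p ^ r" "p > 0" "1 \<le> i" "i \<le> N"
  shows "admissible p N (omega_coeff q t i)"
  unfolding term_R_def using assms padic_exp_powi[OF assms(1,2), of t]
  by (intro admissible_single) (auto simp: admissible_mon_def lookup_single when_def)

lemma admissible_poly_add: "admissible_poly p N A \<Longrightarrow> admissible_poly p N B \<Longrightarrow> admissible_poly p N (A + B)"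
  unfolding admissible_poly_def by (simp add: admissible_add)

lemma admissible_poly_mult: "admissible_poly p N A \<Longrightarrow> admissible_poly p N B \<Longrightarrow> admissible_poly p N (A * B)"
  unfolding admissible_poly_def coeff_mult by (auto intro!: admissible_sum admissible_mult)

lemma admissible_poly_monom: "admissible p N c \<Longrightarrow> admissible_poly p N (monom c i)"
  unfolding admissible_poly_def admissible_def by (simp add: coeff_monom)

lemma admissible_poly_sum: "(\<And>i. i \<in> S \<Longrightarrow> admissible_poly p N (f i)) \<Longrightarrow> admissible_poly p N (\<Sum>i\<in>S. f i)"
  unfolding admissible_poly_def coeff_sum by (auto intro!: admissible_sum)

lemma admissible_poly_pCons: "admissible_poly p N (pCons a A) \<longleftrightarrow> admissible p N a \<and> admissible_poly p N A"
  unfolding admissible_poly_def by (auto simp: coeff_pCons split: nat.splits)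

lemma admissible_poly_xser:
  assumes q: "q = p ^ r" and p: "p > 0" and V: "\<And>i j. V i \<noteq> Om j"
  shows "admissible_poly p N (xser q V n)"
  unfolding xser_def
proof (intro admissible_poly_sum admissible_poly_monom)
  fix i
  have "1 / (of_nat q :: rat) ^ i = 1 / of_nat (p ^ (r * i))" using q by (simp add: power_mult)
  then have "padic_exp p (1 / (of_nat q :: rat) ^ i)" using padic_exp_div_power[OF p padic_exp_1] by simp
  then show "admissible p N (term_R (Poly_Mapping.single (V i) (1 / of_nat q ^ i)))"
    unfolding term_R_def using V by (intro admissible_single) (auto simp: admissible_mon_def lookup_single when_def)
qed

section \<open>Existence of Teichmueller expansions\<close>

definition frel_tail :: "nat \<Rightarrow> int \<Rightarrow> nat \<Rightarrow> R poly" where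
  "frel_tail q t N = (\<Sum>i\<in>{1..N}. monom (omega_coeff q t i) (i - 1))"

lemma of_nat_eq_frel_plus_tail: "[:of_nat p:] = frel p q t N + monom 1 1 * frel_tail q t N"
proof -
  have "monom 1 1 * frel_tail q t N = (\<Sum>i\<in>{1..N}. monom (omega_coeff q t i) i)"
    unfolding frel_tail_def sum_distrib_left by (intro sum.cong) (auto simp: mult_monom)
  then show ?thesis unfolding frel_def by simp
qed

lemma admissible_poly_frel_tail: "q = p ^ r \<Longrightarrow> p > 0 \<Longrightarrow> admissible_poly p N (frel_tail q t N)"
  unfolding frel_tail_def by (intro admissible_poly_sum admissible_poly_monom admissible_omega_coeff) auto

text \<open>One digit of the expansion: the constant term of y is replaced by the Teichmueller lift of its
  reduction mod p; the error is divisible by p, which is pi times frel_tail modulo the relation.\<close>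

lemma teich_digit_step:
  assumes p: "prime p" and q: "q = p ^ r" and y: "admissible_poly p N y"
  obtains a y' where "reduced p a" "admissible p N a" "admissible_poly p N y'"
    "in_pi_ideal (frel p q t N) e (y - [:teich p N a:] - monom 1 1 * y')"
proof -
  have p0: "p > 0" using p prime_gt_0_nat by blast
  obtain y0 y1 where yy: "y = pCons y0 y1" by (cases y) auto
  have y0: "admissible p N y0" and y1: "admissible_poly p N y1"
    using y unfolding yy admissible_poly_pCons by auto
  define a where "a = modp p y0"
  have a: "admissible p N a" unfolding a_def modp_def by (rule admissible_map[OF y0])
  have "(of_nat p :: R) dvd (y0 - a) - (teich p N a - a)"
    unfolding a_def by (intro dvd_diff of_nat_dvd_diff_modp teich_cong_mod_p[OF p])
  then have "(of_nat p :: R) dvd y0 - teich p N a" by simp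
  then obtain W where yW: "y0 - teich p N a = of_nat p * W" and W: "admissible p N W"
    by (metis eq_of_nat_mult_map_div lookup_dvd_if_of_nat_dvd admissible_map admissible_diff
        admissible_teich[OF p0] y0 a)
  define y' where "y' = frel_tail q t N * [:W:] + y1"
  have y_eq: "y = [:y0:] + monom 1 1 * y1" unfolding yy by (simp add: monom_Suc)
  have "[:y0:] - [:teich p N a:] = [:of_nat p:] * [:W:]"
    using yW by (simp add: diff_pCons)
  then have "y - [:teich p N a:] - monom 1 1 * y'
      = [:of_nat p:] * [:W:] - monom 1 1 * frel_tail q t N * [:W:]"
    unfolding y_eq y'_def by (simp add: algebra_simps)
  also have "\<dots> = ([:of_nat p:] - monom 1 1 * frel_tail q t N) * [:W:]"
    by (simp add: algebra_simps)
  also have "\<dots> = frel p q t N * [:W:]"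
    by (simp add: of_nat_eq_frel_plus_tail[of p q t N])
  finally have "in_pi_ideal (frel p q t N) e (y - [:teich p N a:] - monom 1 1 * y')"
    by (simp only: in_pi_ideal_generator)
  moreover have "admissible_poly p N y'"
    unfolding y'_def using admissible_poly_monom[OF W, of 0]
    by (intro admissible_poly_add admissible_poly_mult admissible_poly_frel_tail[OF q p0] y1)
      (simp_all add: monom_0)
  moreover have "reduced p a" unfolding a_def using p0 by (rule reduced_modp)
  ultimately show thesis using that a by blast
qed

lemma teich_partial_expansion_exists:
  assumes p: "prime p" and q: "q = p ^ r" and x: "admissible_poly p N x"
  shows "\<exists>a y. (\<forall>i. reduced p (a i) \<and> admissible p N (a i)) \<and> admissible_poly p N y \<and>
     in_pi_ideal (frel p q t N) (Suc N) (x - (\<Sum>i<k. monom (teich p N (a i)) i) - monom 1 k * y)"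
proof (induction k)
  case 0
  have "reduced p 0" unfolding reduced_def using p prime_gt_0_nat by simp
  then show ?case using x in_pi_ideal_0 by (intro exI[of _ "\<lambda>i. 0"] exI[of _ x]) simp
next
  case (Suc k)
  then obtain a y where a: "\<forall>i. reduced p (a i) \<and> admissible p N (a i)" and y: "admissible_poly p N y"
    and I: "in_pi_ideal (frel p q t N) (Suc N) (x - (\<Sum>i<k. monom (teich p N (a i)) i) - monom 1 k * y)"
    by blast
  obtain ak y' where ak: "reduced p ak" "admissible p N ak" and y': "admissible_poly p N y'"
    and J: "in_pi_ideal (frel p q t N) (Suc N) (y - [:teich p N ak:] - monom 1 1 * y')"
    using teich_digit_step[OF p q y] .
  define a' where "a' = a(k := ak)"
  have "(\<Sum>i<Suc k. monom (teich p N (a' i)) i) = (\<Sum>i<k. monom (teich p N (a i)) i) + monom (teich p N ak) k"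
    unfolding a'_def by simp
  moreover have "monom 1 k * [:teich p N ak:] = monom (teich p N ak) k"
    by (simp add: monom_altdef)
  moreover have "monom 1 k * (monom 1 1 * y') = monom 1 (Suc k) * y'"
    by (simp add: mult.assoc[symmetric] mult_monom)
  ultimately have "x - (\<Sum>i<Suc k. monom (teich p N (a' i)) i) - monom 1 (Suc k) * y'
      = (x - (\<Sum>i<k. monom (teich p N (a i)) i) - monom 1 k * y)
        + monom 1 k * (y - [:teich p N ak:] - monom 1 1 * y')"
    by (simp add: algebra_simps)
  also have "in_pi_ideal (frel p q t N) (Suc N) \<dots>"
    by (intro in_pi_ideal_add I in_pi_ideal_mult_left J)
  finally have "in_pi_ideal (frel p q t N) (Suc N)
      (x - (\<Sum>i<Suc k. monom (teich p N (a' i)) i) - monom 1 (Suc k) * y')" .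
  moreover have "\<forall>i. reduced p (a' i) \<and> admissible p N (a' i)" unfolding a'_def using a ak by simp
  ultimately show ?case using y' by blast
qed

lemma teich_expansion_exists:
  assumes p: "prime p" and q: "q = p ^ r" and x: "admissible_poly p N x"
  shows "\<exists>a. (\<forall>i. reduced p (a i) \<and> admissible p N (a i)) \<and>
     in_pi_ideal (frel p q t N) (Suc N) (x - teich_expansion p N a)"
proof -
  obtain a y where a: "\<forall>i. reduced p (a i) \<and> admissible p N (a i)"
    and "in_pi_ideal (frel p q t N) (Suc N) (x - (\<Sum>i<Suc N. monom (teich p N (a i)) i) - monom 1 (Suc N) * y)"
    using teich_partial_expansion_exists[OF p q x, where k = "Suc N" and t = t] by blast
  then have "in_pi_ideal (frel p q t N) (Suc N)
      ((x - (\<Sum>i<Suc N. monom (teich p N (a i)) i) - monom 1 (Suc N) * y) + monom 1 (Suc N) * y)"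
    by (intro in_pi_ideal_add in_pi_ideal_pi_power)
  then have "in_pi_ideal (frel p q t N) (Suc N) (x - teich_expansion p N a)"
    by (simp add: teich_expansion_def lessThan_Suc_atMost)
  then show ?thesis using a by blast
qed

lemma teich_expansion_truncate_cong:
  assumes p: "prime p" and "i \<le> N"
  shows "in_pi_ideal (frel p q t i) (Suc i) (teich_expansion p N a - teich_expansion p i a)"
proof -
  have "{..N} = {..i} \<union> {Suc i..N}" using assms(2) by auto
  then have "teich_expansion p N a
      = (\<Sum>j\<le>i. monom (teich p N (a j)) j) + (\<Sum>j\<in>{Suc i..N}. monom (teich p N (a j)) j)"
    unfolding teich_expansion_def by (simp add: sum.union_disjoint)
  moreover have "(\<Sum>j\<le>i. monom (teich p N (a j)) j) - teich_expansion p i a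
      = (\<Sum>j\<le>i. monom (teich p N (a j) - teich p i (a j)) j)"
    unfolding teich_expansion_def by (simp add: sum_subtractf[symmetric] diff_monom)
  ultimately have "teich_expansion p N a - teich_expansion p i a
      = (\<Sum>j\<le>i. monom (teich p N (a j) - teich p i (a j)) j) + (\<Sum>j\<in>{Suc i..N}. monom (teich p N (a j)) j)"
    by (simp add: algebra_simps)
  also have "in_pi_ideal (frel p q t i) (Suc i) \<dots>"
  proof (rule in_pi_ideal_add)
    show "in_pi_ideal (frel p q t i) (Suc i) (\<Sum>j\<le>i. monom (teich p N (a j) - teich p i (a j)) j)"
      using teich_cong[OF p assms(2)]
      by (intro in_pi_ideal_sum in_pi_ideal_monom_const) (simp add: diff_pCons)
    show "in_pi_ideal (frel p q t i) (Suc i) (\<Sum>j\<in>{Suc i..N}. monom (teich p N (a j)) j)"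
      by (intro in_pi_ideal_sum in_pi_ideal_monom) simp
  qed
  finally show ?thesis .
qed

lemma teich_expansion_compatible:
  assumes p: "prime p" and iN: "i \<le> N"
    and N: "in_pi_ideal (frel p q t N) (Suc N) (xN - teich_expansion p N aN)"
    and i: "in_pi_ideal (frel p q t i) (Suc i) (xi - teich_expansion p i ai)"
    and x: "monom 1 (Suc i) dvd xN - xi"
    and "\<forall>j. reduced p (aN j)" "\<forall>j. reduced p (ai j)"
  shows "\<forall>j\<le>i. aN j = ai j"
proof (rule teich_expansion_unique[OF p])
  show "\<forall>j\<le>i. reduced p (aN j) \<and> reduced p (ai j)" using assms(6,7) by simp
  have "teich_expansion p i aN - teich_expansion p i ai
      = (xi - teich_expansion p i ai) - (xN - teich_expansion p N aN) + (xN - xi)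
        - (teich_expansion p N aN - teich_expansion p i aN)"
    by (simp add: algebra_simps)
  also have "in_pi_ideal (frel p q t i) (Suc i) \<dots>"
    by (intro in_pi_ideal_add in_pi_ideal_diff i in_pi_ideal_frel_mono[OF iN N]
        in_pi_ideal_if_dvd[OF x] teich_expansion_truncate_cong[OF p iN])
  finally show "in_pi_ideal (frel p q t i) (Suc i) (teich_expansion p i aN - teich_expansion p i ai)" .
qed

section \<open>The arithmetic polynomials\<close>

lemma Qprop_iff:
  "Qprop p q t op Q \<longleftrightarrow> (\<forall>i. LXY_elem p (Q i)) \<and>
     (\<forall>n. in_pi_ideal (frel p q t n) (Suc n)
            (op (xser q Xv n) (xser q Yv n) - teich_expansion p n (\<lambda>i. rootR (q ^ i) (Q i))))"
  unfolding Qprop_def cong_pi_iff teich_expansion_def ..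

lemma admissible_poly_op_xser:
  assumes "op \<in> {(+), (*)}" "q = p ^ r" "p > 0"
  shows "admissible_poly p N (op (xser q Xv n) (xser q Yv n))"
  using assms by (auto intro!: admissible_poly_add admissible_poly_mult admissible_poly_xser)

lemma xser_truncate_dvd:
  assumes "i \<le> N"
  shows "monom 1 (Suc i) dvd xser q V N - xser q V i"
proof -
  have "{..N} = {..i} \<union> {Suc i..N}" using assms by auto
  then have "xser q V N - xser q V i = (\<Sum>j\<in>{Suc i..N}. monom (term_R (Poly_Mapping.single (V j) (1 / of_nat q ^ j))) j)"
    unfolding xser_def by (simp add: sum.union_disjoint)
  also have "monom 1 (Suc i) dvd \<dots>"
  proof (rule dvd_sum)
    fix j assume "j \<in> {Suc i..N}"
    then have "monom c j = monom 1 (Suc i) * monom c (j - Suc i)" for c :: R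
      by (simp add: mult_monom)
    then show "monom 1 (Suc i) dvd monom (term_R (Poly_Mapping.single (V j) (1 / of_nat q ^ j))) j"
      by (metis dvd_triv_left)
  qed
  finally show ?thesis .
qed

lemma op_xser_truncate_dvd:
  assumes "op \<in> {(+), (*)}" "i \<le> N"
  shows "monom 1 (Suc i) dvd op (xser q Xv N) (xser q Yv N) - op (xser q Xv i) (xser q Yv i)"
proof -
  have X: "monom 1 (Suc i) dvd xser q Xv N - xser q Xv i"
    and Y: "monom 1 (Suc i) dvd xser q Yv N - xser q Yv i"
    using xser_truncate_dvd[OF assms(2)] by blast+
  have "xser q Xv N * xser q Yv N - xser q Xv i * xser q Yv i
      = xser q Xv N * (xser q Yv N - xser q Yv i) + (xser q Xv N - xser q Xv i) * xser q Yv i"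
    by (simp add: algebra_simps)
  then show ?thesis
    using assms(1) X Y by (auto simp: dvd_add dvd_mult dvd_mult2 add_diff_add)
qed

lemma LXY_elem_if_reduced_admissible:
  assumes "reduced p x" "admissible p N x" shows "LXY_elem p x"
  using assms unfolding LXY_elem_def reduced_def admissible_def admissible_mon_def by (auto simp: in_keys_iff)

lemma reduced_if_LXY_elem:
  assumes "LXY_elem p x" "p > 0" shows "reduced p x"
  unfolding reduced_def
proof
  fix \<mu>
  show "0 \<le> Poly_Mapping.lookup x \<mu> \<and> Poly_Mapping.lookup x \<mu> < int p"
  proof (cases "\<mu> \<in> Poly_Mapping.keys x")
    case True
    then show ?thesis using assms(1) unfolding LXY_elem_def by blast
  next
    case False
    then show ?thesis using assms(2) by (simp add: in_keys_iff)
  qed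
qed

text \<open>Q_i is the i-th digit of the expansion modulo pi^(i+1), with its exponents multiplied by q^i
  (the expansion involves Q_i^(q^-i)); compatibility makes all truncations agree.\<close>

lemma Qprop_exists:
  assumes p: "prime p" and q: "q = p ^ r" and op: "op \<in> {(+), (*)}"
  shows "\<exists>Q. Qprop p q t op Q \<and> (\<forall>i. admissible p i (Q i))"
proof -
  have p0: "p > 0" using p prime_gt_0_nat by blast
  have q0: "q > 0" using q p0 by simp
  define P where "P N a \<longleftrightarrow> (\<forall>i. reduced p (a i) \<and> admissible p N (a i)) \<and>
     in_pi_ideal (frel p q t N) (Suc N) (op (xser q Xv N) (xser q Yv N) - teich_expansion p N a)" for N a
  define A where "A N = (SOME a. P N a)" for N
  have "\<exists>a. P N a" for N
    unfolding P_def by (rule teich_expansion_exists[OF p q admissible_poly_op_xser[OF op q p0]])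
  then have PA: "P N (A N)" for N
    unfolding A_def by (rule someI_ex)
  define Q where "Q i = map_monomials (mon_scale (q ^ i)) (A i i)" for i
  have root_Q: "rootR (q ^ i) (Q i) = A i i" for i
    using q0 by (simp add: Q_def rootR_eq_map_monomials map_monomials_mon_div_mon_scale)
  have "reduced p (Q i)" for i
    unfolding Q_def using PA[of i] p0 q0 unfolding P_def
    by (intro reduced_map_monomials inj_mon_scale) auto
  moreover have admissible_Q: "admissible p i (Q i)" for i
    unfolding Q_def using PA[of i] unfolding P_def
    by (intro admissible_map_monomials admissible_mon_scale) auto
  ultimately have "LXY_elem p (Q i)" for i
    by (rule LXY_elem_if_reduced_admissible)
  moreover have "A i i = A N i" if "i \<le> N" for i N
  proof -
    have "\<forall>j\<le>i. A N j = A i j"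
      using PA[of N] PA[of i] unfolding P_def
      by (intro teich_expansion_compatible[OF p that _ _ op_xser_truncate_dvd[OF op that]]) auto
    then show ?thesis by simp
  qed
  then have "teich_expansion p n (\<lambda>i. rootR (q ^ i) (Q i)) = teich_expansion p n (A n)" for n
    unfolding teich_expansion_def root_Q by (intro sum.cong) auto
  ultimately have "Qprop p q t op Q"
    unfolding Qprop_iff using PA unfolding P_def by simp
  then show ?thesis using admissible_Q by blast
qed

lemma Qprop_unique:
  assumes p: "prime p" and q: "q = p ^ r" and Q: "Qprop p q t op Q" and Q': "Qprop p q t op Q'"
  shows "Q = Q'"
proof
  fix i
  have p0: "p > 0" using p prime_gt_0_nat by blast
  have qi: "q ^ i > 0" using q p0 by simp
  have reduced_root: "reduced p (rootR (q ^ j) (F j))" if "Qprop p q t op F" for F j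
    unfolding rootR_eq_map_monomials
    by (rule reduced_map_monomials[OF inj_mon_div reduced_if_LXY_elem])
      (use that p0 q in \<open>auto simp: Qprop_def\<close>)
  have "in_pi_ideal (frel p q t i) (Suc i)
      ((op (xser q Xv i) (xser q Yv i) - teich_expansion p i (\<lambda>j. rootR (q ^ j) (Q' j)))
       - (op (xser q Xv i) (xser q Yv i) - teich_expansion p i (\<lambda>j. rootR (q ^ j) (Q j))))"
    using Q Q' unfolding Qprop_iff by (blast intro: in_pi_ideal_diff)
  then have "\<forall>j\<le>i. rootR (q ^ j) (Q j) = rootR (q ^ j) (Q' j)"
    by (intro teich_expansion_unique[OF p]) (auto intro: reduced_root Q Q')
  then have "map_monomials (mon_scale (q ^ i)) (rootR (q ^ i) (Q i))
      = map_monomials (mon_scale (q ^ i)) (rootR (q ^ i) (Q' i))" by simp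
  then show "Q i = Q' i"
    unfolding rootR_eq_map_monomials map_monomials_mon_scale_mon_div[OF qi] .
qed

lemma Qprop_The:
  assumes p: "prime p" and q: "q = p ^ r" and op: "op \<in> {(+), (*)}"
  shows "Qprop p q t op (THE Q. Qprop p q t op Q)" and "admissible p i ((THE Q. Qprop p q t op Q) i)"
proof -
  obtain Q where Q: "Qprop p q t op Q" "\<forall>i. admissible p i (Q i)" using Qprop_exists[OF p q op] by blast
  have "(THE Q. Qprop p q t op Q) = Q"
    using Q(1) Qprop_unique[OF p q] by blast
  then show "Qprop p q t op (THE Q. Qprop p q t op Q)" "admissible p i ((THE Q. Qprop p q t op Q) i)"
    using Q by simp_all
qed

section \<open>Twisting by omega_i |-> omega_i^q\<close>

lemma map_poly_add_hom:
  fixes f :: "'a::ab_group_add \<Rightarrow> 'b::ab_group_add"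
  assumes f: "\<And>x y. f (x + y) = f x + f y"
  shows "map_poly f (A + B) = map_poly f A + map_poly f B"
proof -
  have "f 0 = 0" using f[of 0 0] by simp
  then show ?thesis by (intro poly_eqI) (simp add: coeff_map_poly f)
qed

lemma map_poly_diff_hom:
  fixes f :: "'a::ab_group_add \<Rightarrow> 'b::ab_group_add"
  assumes f: "\<And>x y. f (x + y) = f x + f y"
  shows "map_poly f (A - B) = map_poly f A - map_poly f B"
  using map_poly_add_hom[OF f, of "A - B" B] by (simp add: eq_diff_eq)

lemma map_poly_sum_hom:
  fixes f :: "'a::ab_group_add \<Rightarrow> 'b::ab_group_add"
  assumes f: "\<And>x y. f (x + y) = f x + f y"
  shows "map_poly f (\<Sum>i\<in>S. F i) = (\<Sum>i\<in>S. map_poly f (F i))"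
  by (induction S rule: infinite_finite_induct) (simp_all add: map_poly_add_hom[OF f])

lemma map_poly_mult_hom:
  fixes f :: "'a::comm_ring_1 \<Rightarrow> 'b::comm_ring_1"
  assumes f: "\<And>x y. f (x + y) = f x + f y" "\<And>x y. f (x * y) = f x * f y"
  shows "map_poly f (A * B) = map_poly f A * map_poly f B"
proof -
  have f0: "f 0 = 0" using f(1)[of 0 0] by simp
  have "f (\<Sum>i\<in>S. g i) = (\<Sum>i\<in>S. f (g i))" for S and g :: "nat \<Rightarrow> 'a"
    by (induction S rule: infinite_finite_induct) (simp_all add: f0 f(1))
  then show ?thesis by (intro poly_eqI) (simp add: coeff_map_poly f0 coeff_mult f(2))
qed

definition omega_scale :: "nat \<Rightarrow> mon \<Rightarrow> mon" where
  "omega_scale q \<mu> = Poly_Mapping.mapp (\<lambda>v e. if (\<exists>i. v = Om i) then of_nat q * e else e) \<mu>"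

abbreviation omega_frob :: "nat \<Rightarrow> R \<Rightarrow> R" where
  "omega_frob q \<equiv> map_monomials (omega_scale q)"

lemma lookup_omega_scale [simp]:
  "Poly_Mapping.lookup (omega_scale q \<mu>) v =
     (if (\<exists>i. v = Om i) then of_nat q * Poly_Mapping.lookup \<mu> v else Poly_Mapping.lookup \<mu> v)"
  unfolding omega_scale_def lookup_mapp by (auto simp: when_def in_keys_iff)

lemma omega_scale_add: "omega_scale q (a + b) = omega_scale q a + omega_scale q b"
  by (rule poly_mapping_eqI) (simp add: lookup_add algebra_simps)

lemma omega_scale_0: "omega_scale q 0 = 0"
  by (rule poly_mapping_eqI) simp

lemma keys_omega_scale: "q > 0 \<Longrightarrow> Poly_Mapping.keys (omega_scale q \<mu>) = Poly_Mapping.keys \<mu>"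
  by (auto simp: in_keys_iff split: if_splits)

lemma inj_omega_scale:
  assumes "q > 0" shows "inj (omega_scale q)"
proof (rule injI)
  fix a b assume e: "omega_scale q a = omega_scale q b"
  show "a = b"
  proof (rule poly_mapping_eqI)
    fix v
    have "Poly_Mapping.lookup (omega_scale q a) v = Poly_Mapping.lookup (omega_scale q b) v"
      using e by simp
    then show "Poly_Mapping.lookup a v = Poly_Mapping.lookup b v" using assms by (simp split: if_splits)
  qed
qed

lemma omega_frob_mult: "omega_frob q (x * y) = omega_frob q x * omega_frob q y"
  by (rule map_monomials_mult) (rule omega_scale_add)

lemma omega_frob_one: "omega_frob q 1 = 1"
  using map_monomials_of_nat[of "omega_scale q" 1] by (simp add: omega_scale_0)

lemma omega_frob_power: "omega_frob q (x ^ n) = omega_frob q x ^ n"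
  by (rule map_monomials_power) (simp_all add: omega_scale_add omega_scale_0)

lemma map_poly_omega_frob_add: "map_poly (omega_frob q) (A + B) = map_poly (omega_frob q) A + map_poly (omega_frob q) B"
  by (rule map_poly_add_hom) (rule map_monomials_add)

lemma map_poly_omega_frob_diff: "map_poly (omega_frob q) (A - B) = map_poly (omega_frob q) A - map_poly (omega_frob q) B"
  by (rule map_poly_diff_hom) (rule map_monomials_add)

lemma map_poly_omega_frob_sum: "map_poly (omega_frob q) (\<Sum>i\<in>S. F i) = (\<Sum>i\<in>S. map_poly (omega_frob q) (F i))"
  by (rule map_poly_sum_hom) (rule map_monomials_add)

lemma map_poly_omega_frob_mult: "map_poly (omega_frob q) (A * B) = map_poly (omega_frob q) A * map_poly (omega_frob q) B"
  by (rule map_poly_mult_hom) (simp_all add: map_monomials_add omega_frob_mult)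

lemma map_poly_omega_frob_monom: "map_poly (omega_frob q) (monom c n) = monom (omega_frob q c) n"
  by (rule map_poly_monom) simp

lemma map_poly_omega_frob_op:
  assumes "op \<in> {(+), (*)}"
  shows "map_poly (omega_frob q) (op A B) = op (map_poly (omega_frob q) A) (map_poly (omega_frob q) B)"
  using assms by (auto simp: map_poly_omega_frob_add map_poly_omega_frob_mult)

lemma map_poly_omega_frob_frel:
  assumes "q > 0"
  shows "map_poly (omega_frob q) (frel p q t n) = frel p q (t + 1) n"
proof -
  have "omega_scale q (Poly_Mapping.single (Om i) e) = Poly_Mapping.single (Om i) (of_nat q * e)" for i e
    by (rule poly_mapping_eqI) (auto simp: lookup_single when_def)
  then have "omega_frob q (omega_coeff q t i) = omega_coeff q (t + 1) i" for i
    unfolding term_R_def using assms by (simp add: power_int_add_1')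
  moreover have "omega_frob q (of_nat p) = of_nat p"
    by (rule map_monomials_of_nat) (rule omega_scale_0)
  ultimately show ?thesis
    by (simp add: frel_def map_poly_omega_frob_diff map_poly_omega_frob_sum map_poly_omega_frob_monom
        map_poly_pCons)
qed

lemma map_poly_omega_frob_xser:
  assumes "\<And>i j. V i \<noteq> Om j"
  shows "map_poly (omega_frob q) (xser q V n) = xser q V n"
proof -
  have "omega_scale q (Poly_Mapping.single (V i) e) = Poly_Mapping.single (V i) e" for i e
    using assms by (intro poly_mapping_eqI) (auto simp: lookup_single when_def)
  then show ?thesis
    by (simp add: xser_def term_R_def map_poly_omega_frob_sum map_poly_omega_frob_monom)
qed

lemma omega_frob_teich: "omega_frob q (teich p n (rootR s x)) = teich p n (rootR s (omega_frob q x))"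
proof -
  have "omega_scale q \<circ> (mon_div a \<circ> mon_div b) = mon_div a \<circ> (mon_div b \<circ> omega_scale q)" for a b
    by (intro ext poly_mapping_eqI) simp
  then show ?thesis
    unfolding teich_def omega_frob_power rootR_eq_map_monomials map_monomials_comp by simp
qed

lemma LXY_elem_omega_frob:
  assumes "q > 0" "LXY_elem p x" shows "LXY_elem p (omega_frob q x)"
  unfolding LXY_elem_def
proof
  fix \<nu> assume "\<nu> \<in> Poly_Mapping.keys (omega_frob q x)"
  then obtain \<mu> where \<mu>: "\<mu> \<in> Poly_Mapping.keys x" "\<nu> = omega_scale q \<mu>"
    unfolding keys_map_monomials_inj[OF inj_omega_scale[OF assms(1)]] by blast
  have "Poly_Mapping.lookup (omega_frob q x) \<nu> = Poly_Mapping.lookup x \<mu>"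
    unfolding \<mu>(2) by (rule lookup_map_monomials_inj[OF inj_omega_scale[OF assms(1)]])
  moreover have "0 \<le> Poly_Mapping.lookup x \<mu> \<and> Poly_Mapping.lookup x \<mu> < int p \<and>
        (\<forall>v\<in>Poly_Mapping.keys \<mu>. (\<forall>i. v = Om i \<longrightarrow> 1 \<le> i) \<and> padic_exp p (Poly_Mapping.lookup \<mu> v))"
    using assms(2) \<mu>(1) unfolding LXY_elem_def by blast
  ultimately show "0 \<le> Poly_Mapping.lookup (omega_frob q x) \<nu> \<and> Poly_Mapping.lookup (omega_frob q x) \<nu> < int p \<and>
        (\<forall>v\<in>Poly_Mapping.keys \<nu>. (\<forall>i. v = Om i \<longrightarrow> 1 \<le> i) \<and> padic_exp p (Poly_Mapping.lookup \<nu> v))"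
    unfolding \<mu>(2) keys_omega_scale[OF assms(1)] by (auto intro: padic_exp_of_nat_mult)
qed

lemma Qprop_omega_frob:
  assumes q0: "q > 0" and op: "op \<in> {(+), (*)}" and Q: "Qprop p q t op Q"
  shows "Qprop p q (t + 1) op (omega_frob q \<circ> Q)"
  unfolding Qprop_def
proof (intro conjI allI)
  fix i show "LXY_elem p ((omega_frob q \<circ> Q) i)"
    using Q LXY_elem_omega_frob[OF q0] unfolding Qprop_def by simp
next
  fix n
  obtain g h where "op (xser q Xv n) (xser q Yv n) - (\<Sum>i\<le>n. monom (teich p n (rootR (q ^ i) (Q i))) i)
      = frel p q t n * g + monom 1 (Suc n) * h"
    using Q unfolding Qprop_def cong_pi_def by blast
  then have "map_poly (omega_frob q) (op (xser q Xv n) (xser q Yv n) - (\<Sum>i\<le>n. monom (teich p n (rootR (q ^ i) (Q i))) i))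
     = map_poly (omega_frob q) (frel p q t n * g + monom 1 (Suc n) * h)"
    by simp
  then have "op (xser q Xv n) (xser q Yv n) - (\<Sum>i\<le>n. monom (teich p n (rootR (q ^ i) ((omega_frob q \<circ> Q) i))) i)
     = frel p q (t + 1) n * map_poly (omega_frob q) g + monom 1 (Suc n) * map_poly (omega_frob q) h"
    by (simp add: map_poly_omega_frob_diff map_poly_omega_frob_add map_poly_omega_frob_mult
        map_poly_omega_frob_op[OF op] map_poly_omega_frob_xser map_poly_omega_frob_sum
        map_poly_omega_frob_monom omega_frob_teich map_poly_omega_frob_frel[OF q0] omega_frob_one)
  then show "cong_pi p q (t + 1) n (op (xser q Xv n) (xser q Yv n))
       (\<Sum>i\<le>n. monom (teich p n (rootR (q ^ i) ((omega_frob q \<circ> Q) i))) i)"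
    unfolding cong_pi_def by blast
qed

lemma Qprop_The_Suc:
  assumes p: "prime p" and q: "q = p ^ r" and op: "op \<in> {(+), (*)}"
  shows "(THE Q. Qprop p q (t + 1) op Q) = omega_frob q \<circ> (THE Q. Qprop p q t op Q)"
proof (rule Qprop_unique[OF p q])
  show "Qprop p q (t + 1) op (THE Q. Qprop p q (t + 1) op Q)" by (rule Qprop_The[OF p q op])
  have "q > 0" using q p prime_gt_0_nat by simp
  then show "Qprop p q (t + 1) op (omega_frob q \<circ> (THE Q. Qprop p q t op Q))"
    by (rule Qprop_omega_frob[OF _ op Qprop_The(1)[OF p q op]])
qed

section \<open>Evaluation in L_m-algebras\<close>

definition Lm_monomial :: "nat \<Rightarrow> enat \<Rightarrow> mon \<Rightarrow> bool" where
  "Lm_monomial p m \<nu> \<longleftrightarrow>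
     (\<forall>v\<in>Poly_Mapping.keys \<nu>. (\<exists>i. v = Om i \<and> 1 \<le> i \<and> enat i \<le> m) \<and> padic_exp p (Poly_Mapping.lookup \<nu> v))"

lemma Lm_elem_single:
  assumes "Lm_monomial p m \<nu>" "0 \<le> c" "c < int p"
  shows "Lm_elem p m (Poly_Mapping.single \<nu> c)"
  using assms unfolding Lm_elem_def Lm_monomial_def by (cases "c = 0") auto

lemma Lm_monomial_0 [simp]: "Lm_monomial p m 0"
  unfolding Lm_monomial_def by simp

lemma Lm_monomial_mon_scale:
  assumes "Lm_monomial p m \<nu>" "j > 0" shows "Lm_monomial p m (mon_scale j \<nu>)"
proof -
  have "Poly_Mapping.keys (mon_scale j \<nu>) = Poly_Mapping.keys \<nu>" using assms(2) by (auto simp: in_keys_iff)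
  then show ?thesis using assms(1) unfolding Lm_monomial_def by (auto intro: padic_exp_of_nat_mult)
qed

lemma modp_single: "modp p (Poly_Mapping.single \<nu> c) = Poly_Mapping.single \<nu> (c mod int p)"
  unfolding modp_def by (rule map_single) simp

lemma Lm_alg_zero:
  assumes "Lm_alg p m \<phi>"
  shows "\<phi> 0 = 0"
proof -
  have "Lm_elem p m 0" unfolding Lm_elem_def by simp
  then have "\<phi> (modp p (0 + 0)) = \<phi> 0 + \<phi> 0" using assms unfolding Lm_alg_def by blast
  moreover have "modp p 0 = 0" unfolding modp_def by (rule poly_mapping_eqI) (simp add: lookup_map_zero)
  ultimately show ?thesis by simp
qed

lemma Lm_alg_char:
  assumes p: "prime p" and \<phi>: "Lm_alg p m (\<phi> :: R \<Rightarrow> 'k::comm_ring_1)"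
  shows "(of_nat p :: 'k) = 0"
proof -
  have p1: "p > 1" using p prime_gt_1_nat by blast
  have one: "\<phi> 1 = 1" and L1: "Lm_elem p m 1"
    using \<phi> Lm_elem_single[OF Lm_monomial_0, of 1 p m] p1 unfolding Lm_alg_def by (simp_all flip: single_one)
  have step: "\<phi> (Poly_Mapping.single 0 (int (Suc j) mod int p)) = \<phi> (Poly_Mapping.single 0 (int j)) + 1"
    if "j < p" for j
  proof -
    have "Lm_elem p m (Poly_Mapping.single 0 (int j))"
      using Lm_elem_single[OF Lm_monomial_0, where c = "int j"] that by simp
    then have "\<phi> (modp p (Poly_Mapping.single 0 (int j) + 1)) = \<phi> (Poly_Mapping.single 0 (int j)) + 1"
      using \<phi> L1 one unfolding Lm_alg_def by simp
    moreover have "Poly_Mapping.single 0 (int j) + 1 = (Poly_Mapping.single 0 (int j + 1) :: R)"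
      using single_add[of 0 "int j" 1] unfolding single_one by (rule sym)
    ultimately show ?thesis by (simp add: modp_single add.commute)
  qed
  have counting: "\<phi> (Poly_Mapping.single 0 (int j)) = of_nat j" if "j < p" for j
    using that
  proof (induction j)
    case (Suc j)
    then show ?case using step[of j] by simp
  qed (simp add: Lm_alg_zero[OF \<phi>])
  have "(0 :: 'k) = \<phi> (Poly_Mapping.single 0 (int p mod int p))"
    using Lm_alg_zero[OF \<phi>] by simp
  also have "\<dots> = of_nat p"
    using step[of "p - 1"] counting[of "p - 1"] p1 by (simp add: of_nat_diff)
  finally show ?thesis by simp
qed

lemma Lm_alg_power_single:
  assumes p: "prime p" and \<phi>: "Lm_alg p m \<phi>"
    and \<nu>: "Lm_monomial p m \<nu>" and c: "0 \<le> c" "c < int p" and "j \<ge> 1"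
  shows "\<phi> (Poly_Mapping.single (mon_scale j \<nu>) (c ^ j mod int p)) = \<phi> (Poly_Mapping.single \<nu> c) ^ j"
  using assms(6)
proof (induction j rule: dec_induct)
  case base
  have "mon_scale 1 \<nu> = \<nu>" by (rule poly_mapping_eqI) simp
  then show ?case using c by simp
next
  case (step j)
  have "int p > 0" using p prime_gt_0_nat by simp
  then have "Lm_elem p m (Poly_Mapping.single (mon_scale j \<nu>) (c ^ j mod int p))"
    using step by (intro Lm_elem_single Lm_monomial_mon_scale[OF \<nu>]) auto
  then have "\<phi> (modp p (Poly_Mapping.single \<nu> c * Poly_Mapping.single (mon_scale j \<nu>) (c ^ j mod int p)))
      = \<phi> (Poly_Mapping.single \<nu> c) * \<phi> (Poly_Mapping.single (mon_scale j \<nu>) (c ^ j mod int p))"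
    using \<phi> Lm_elem_single[OF \<nu> c] unfolding Lm_alg_def by blast
  moreover have "\<nu> + mon_scale j \<nu> = mon_scale (Suc j) \<nu>"
    by (rule poly_mapping_eqI) (simp add: lookup_add algebra_simps)
  moreover have "c * (c ^ j mod int p) mod int p = c ^ Suc j mod int p"
    by (simp add: mod_mult_right_eq)
  ultimately show ?case using step by (simp add: mult_single modp_single)
qed

lemma Lm_alg_frobenius_single:
  assumes p: "prime p" and \<phi>: "Lm_alg p m \<phi>"
    and \<nu>: "Lm_monomial p m \<nu>" and c: "0 \<le> c" "c < int p"
  shows "\<phi> (Poly_Mapping.single (mon_scale (p ^ r) \<nu>) c) = \<phi> (Poly_Mapping.single \<nu> c) ^ (p ^ r)"
proof -
  have "c ^ (p ^ r) mod int p = c mod int p"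
    using fermat_int_prime_power[OF p] by (simp add: mod_eq_dvd_iff)
  then have "c ^ (p ^ r) mod int p = c" using c by simp
  moreover have "p ^ r \<ge> 1" using p prime_gt_0_nat by (simp add: Suc_leI)
  ultimately show ?thesis using Lm_alg_power_single[OF p \<phi> \<nu> c, of "p ^ r"] by simp
qed

lemma lookup_omega_part:
  "Poly_Mapping.lookup (omega_part \<mu>) v = (if (\<exists>i. v = Om i) then Poly_Mapping.lookup \<mu> v else 0)"
proof -
  have "Poly_Mapping.lookup (omega_part \<mu>) v =
    (\<Sum>w\<in>{w\<in>Poly_Mapping.keys \<mu>. \<exists>i. w = Om i}. if w = v then Poly_Mapping.lookup \<mu> w else 0)"
    unfolding omega_part_def by (rule lookup_sum_single) simp
  also have "\<dots> = (if (\<exists>i. v = Om i) then Poly_Mapping.lookup \<mu> v else 0)"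
    by (auto simp: in_keys_iff)
  finally show ?thesis .
qed

lemma omega_part_omega_scale: "omega_part (omega_scale q \<mu>) = mon_scale q (omega_part \<mu>)"
  by (rule poly_mapping_eqI) (simp add: lookup_omega_part)

lemma Lm_monomial_omega_part:
  assumes "admissible_mon p n \<mu>" "enat n \<le> m"
  shows "Lm_monomial p m (omega_part \<mu>)"
  unfolding Lm_monomial_def
proof
  fix v assume "v \<in> Poly_Mapping.keys (omega_part \<mu>)"
  then obtain i where i: "v = Om i" and l: "Poly_Mapping.lookup \<mu> v \<noteq> 0"
    by (auto simp: in_keys_iff lookup_omega_part split: if_splits)
  then have "1 \<le> i \<and> i \<le> n" "padic_exp p (Poly_Mapping.lookup \<mu> v)"
    using assms(1) unfolding admissible_mon_def by auto
  then show "(\<exists>i. v = Om i \<and> 1 \<le> i \<and> enat i \<le> m) \<and> padic_exp p (Poly_Mapping.lookup (omega_part \<mu>) v)"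
    using i assms(2) order_trans[of "enat i" "enat n" m] by (auto simp: lookup_omega_part)
qed

definition mon_value :: "(nat \<Rightarrow> 'k::comm_ring_1) \<Rightarrow> (nat \<Rightarrow> 'k) \<Rightarrow> mon \<Rightarrow> 'k" where
  "mon_value a b \<mu> = (\<Prod>v\<in>Poly_Mapping.keys \<mu>. (case v of Xv j \<Rightarrow> a j ^ nat \<lfloor>Poly_Mapping.lookup \<mu> v\<rfloor>
                              | Yv j \<Rightarrow> b j ^ nat \<lfloor>Poly_Mapping.lookup \<mu> v\<rfloor>
                              | Om _ \<Rightarrow> 1))"

lemma evalQ_eq_sum_mon_value:
  "evalQ \<phi> Q a b = (\<Sum>\<mu>\<in>Poly_Mapping.keys Q. \<phi> (Poly_Mapping.single (omega_part \<mu>) (Poly_Mapping.lookup Q \<mu>)) * mon_value a b \<mu>)"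
  unfolding evalQ_def mon_value_def ..

lemma mon_value_omega_scale:
  assumes "q > 0"
  shows "mon_value (\<lambda>i. a i ^ q) (\<lambda>i. b i ^ q) (omega_scale q \<mu>) = mon_value a b \<mu> ^ q"
  unfolding mon_value_def keys_omega_scale[OF assms] prod_power_distrib
  by (intro prod.cong refl) (auto split: var.splits simp flip: power_mult simp: mult.commute)

text \<open>In k the twist omega_i |-> omega_i^q acts on each coefficient as the q-th power, since the
  digits c in {0..<p} satisfy c^q = c mod p; and the q-th power map of k is additive.\<close>

lemma evalQ_omega_frob:
  assumes p: "prime p" and q: "q = p ^ r" and \<phi>: "Lm_alg p m (\<phi> :: R \<Rightarrow> 'k::comm_ring_1)"
    and L: "LXY_elem p Q" and G: "admissible p n Q" and nm: "enat n \<le> m"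
  shows "evalQ \<phi> (omega_frob q Q) (\<lambda>i. a i ^ q) (\<lambda>i. b i ^ q) = evalQ \<phi> Q a b ^ q"
proof -
  have q0: "q > 0" using q p prime_gt_0_nat by simp
  let ?T = "\<lambda>\<mu>. \<phi> (Poly_Mapping.single (omega_part \<mu>) (Poly_Mapping.lookup Q \<mu>)) * mon_value a b \<mu>"
  have "\<phi> (Poly_Mapping.single (omega_part (omega_scale q \<mu>)) (Poly_Mapping.lookup (omega_frob q Q) (omega_scale q \<mu>)))
      * mon_value (\<lambda>i. a i ^ q) (\<lambda>i. b i ^ q) (omega_scale q \<mu>) = ?T \<mu> ^ q"
    if \<mu>: "\<mu> \<in> Poly_Mapping.keys Q" for \<mu>
  proof -
    have "0 \<le> Poly_Mapping.lookup Q \<mu>" "Poly_Mapping.lookup Q \<mu> < int p"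
      using L \<mu> unfolding LXY_elem_def by auto
    moreover have "Lm_monomial p m (omega_part \<mu>)"
      using G \<mu> nm unfolding admissible_def by (blast intro: Lm_monomial_omega_part)
    ultimately have "\<phi> (Poly_Mapping.single (mon_scale q (omega_part \<mu>)) (Poly_Mapping.lookup Q \<mu>))
        = \<phi> (Poly_Mapping.single (omega_part \<mu>) (Poly_Mapping.lookup Q \<mu>)) ^ q"
      unfolding q by (intro Lm_alg_frobenius_single[OF p \<phi>])
    then show ?thesis
      unfolding lookup_map_monomials_inj[OF inj_omega_scale[OF q0]] omega_part_omega_scale
        mon_value_omega_scale[OF q0]
      by (simp add: power_mult_distrib)
  qed
  then have "evalQ \<phi> (omega_frob q Q) (\<lambda>i. a i ^ q) (\<lambda>i. b i ^ q) = (\<Sum>\<mu>\<in>Poly_Mapping.keys Q. ?T \<mu> ^ q)"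
    unfolding evalQ_eq_sum_mon_value keys_map_monomials_inj[OF inj_omega_scale[OF q0]]
    by (simp add: sum.reindex inj_on_subset[OF inj_omega_scale[OF q0]])
  also have "\<dots> = (\<Sum>\<mu>\<in>Poly_Mapping.keys Q. ?T \<mu>) ^ q"
    using prime_dvd_sum_power_prime_power_diff[OF p, of ?T _ r] Lm_alg_char[OF p \<phi>] q by simp
  finally show ?thesis unfolding evalQ_eq_sum_mon_value .
qed

lemma Frob_evalQ_arith_poly:
  assumes p: "prime p" and q: "q = p ^ r" and \<phi>: "Lm_alg p m \<phi>"
    and op: "op \<in> {(+), (*)}" and nm: "enat n \<le> m"
  shows "Frob q (\<lambda>n. evalQ \<phi> ((THE Q. Qprop p q t op Q) n) a b) n =
    evalQ \<phi> ((THE Q. Qprop p q (t + 1) op Q) n) (Frob q a) (Frob q b)"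
proof -
  have "LXY_elem p ((THE Q. Qprop p q t op Q) n)"
    using Qprop_The(1)[OF p q op] unfolding Qprop_def by blast
  then show ?thesis
    unfolding Qprop_The_Suc[OF p q op] Frob_def
    using evalQ_omega_frob[OF p q \<phi> _ Qprop_The(2)[OF p q op] nm] by simp
qed

lemma multiplicative_power:
  assumes "g 1 = 1" "\<And>x y. g (x * y) = g x * g y"
  shows "g (x ^ n) = g x ^ n"
  using assms by (induction n) auto

theorem proposition2p7:
  fixes p r q :: nat and t :: int and m :: enat and \<phi> :: "R \<Rightarrow> 'k::comm_ring_1"
  assumes "prime p" and "r \<ge> 1" and "q = p ^ r" and "Lm_alg p m \<phi>"
  shows "(\<forall>a b n. enat n \<le> m \<longrightarrow>
            Frob q (W_add p q t \<phi> a b) n = W_add p q (t + 1) \<phi> (Frob q a) (Frob q b) n) \<and>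
         (\<forall>a b n. enat n \<le> m \<longrightarrow>
            Frob q (W_mul p q t \<phi> a b) n = W_mul p q (t + 1) \<phi> (Frob q a) (Frob q b) n) \<and>
         (\<forall>n. enat n \<le> m \<longrightarrow> Frob q (W_one :: nat \<Rightarrow> 'k) n = W_one n) \<and>
         (\<forall>n. enat n \<le> m \<longrightarrow> Frob q (W_zero :: nat \<Rightarrow> 'k) n = W_zero n) \<and>
         (\<forall>(\<psi> :: R \<Rightarrow> 'l::comm_ring_1) (g :: 'k \<Rightarrow> 'l).
            Lm_alg p m \<psi> \<longrightarrow> g 1 = 1 \<longrightarrow> (\<forall>x y. g (x + y) = g x + g y) \<longrightarrow>
            (\<forall>x y. g (x * y) = g x * g y) \<longrightarrow> (\<forall>c. Lm_elem p m c \<longrightarrow> g (\<phi> c) = \<psi> c) \<longrightarrow>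
            (\<forall>a n. enat n \<le> m \<longrightarrow> g (Frob q a n) = Frob q (g \<circ> a) n))"
proof (intro conjI allI impI)
  note frob = Frob_evalQ_arith_poly[OF assms(1,3,4)]
  fix a b :: "nat \<Rightarrow> 'k" and n assume "enat n \<le> m"
  then show "Frob q (W_add p q t \<phi> a b) n = W_add p q (t + 1) \<phi> (Frob q a) (Frob q b) n"
    and "Frob q (W_mul p q t \<phi> a b) n = W_mul p q (t + 1) \<phi> (Frob q a) (Frob q b) n"
    unfolding W_add_def Qadd_def W_mul_def Qmul_def by (simp_all add: frob)
next
  fix n
  have "q > 0" using assms(1,3) prime_gt_0_nat by simp
  then show "Frob q (W_one :: nat \<Rightarrow> 'k) n = W_one n" and "Frob q (W_zero :: nat \<Rightarrow> 'k) n = W_zero n"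
    unfolding Frob_def W_one_def W_zero_def by (simp_all add: zero_power)
next
  fix g :: "'k \<Rightarrow> 'l::comm_ring_1" and a n
  assume "g 1 = 1" "\<forall>x y. g (x * y) = g x * g y"
  then show "g (Frob q a n) = Frob q (g \<circ> a) n"
    unfolding Frob_def by (simp add: multiplicative_power)
qed

end
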